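(* The commutator subgroup $F_\tau'=[F_\tau,F_\tau]$ is a simple group.
   Context: Let $\tau=(\sqrt5-1)/2$. $F_\tau$ is the group, under composition, of orientation-preserving homeomorphisms of $[0,1]$ that are piecewise linear with finitely many breakpoints, all breakpoints in $\mathbb{Z}[\tau]=\{a+b\tau:a,b\in\mathbb{Z}\}$ and all slopes integer powers of $\tau$. *)

theory Defs
  imports "HOL-Analysis.Analysis" "HOL-Algebra.Algebra"
begin

definition tau :: real where "tau = (sqrt 5 - 1) / 2"

definition Ztau :: "real set" where
  "Ztau = {of_int a + of_int b * tau | a b. True}"

text \<open>Such maps are represented as functions real => real equal to the identity outside [0,1]
 (an extensional normalisation so that composition is the group law).\<close>
definition Ftau_set :: "(real \<Rightarrow> real) set" where
  "Ftau_set = {f.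
     (\<forall>x. x \<notin> {0..1} \<longrightarrow> f x = x) \<and>
     bij_betw f {0..1} {0..1} \<and> continuous_on {0..1} f \<and> strict_mono_on {0..1} f \<and>
     (\<exists>xs :: real list.
        sorted_wrt (<) xs \<and> xs \<noteq> [] \<and> hd xs = 0 \<and> last xs = 1 \<and> set xs \<subseteq> Ztau \<and>
        (\<forall>i. Suc i < length xs \<longrightarrow>
           (\<exists>(k::int) (c::real). \<forall>x \<in> {xs ! i .. xs ! Suc i}. f x = tau powi k * x + c)))}"

definition Ftau :: "(real \<Rightarrow> real) monoid" where
  "Ftau = \<lparr>carrier = Ftau_set, mult = (\<circ>), one = id\<rparr>"

text \<open>Simplicity for possibly infinite groups (HOL-Algebra's simple_group uses
 the cardinality order G > 1, which is only meaningful for finite groups).\<close>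
definition simple_grp :: "('a, 'b) monoid_scheme \<Rightarrow> bool" where
  "simple_grp G \<longleftrightarrow> group G \<and> carrier G \<noteq> {\<one>\<^bsub>G\<^esub>} \<and>
     (\<forall>H. H \<lhd> G \<longrightarrow> H = carrier G \<or> H = {\<one>\<^bsub>G\<^esub>})"

end

theory Submission
  imports Defs
begin

(* Higman's argument. A nontrivial normal subgroup N of F_tau' contains some g that moves an open
   interval J off itself. For x, y in F_tau' supported in J, the element g x^-1 g^-1 is supported in
   g J and hence commutes with y, so [x, y] = [[x, g], y] lies in N. Since F_tau' contains elements
   squeezing any [p, q] in (0, 1) into J, the same holds for x, y in F_tau' supported in [p, q], and
   then for u, v in F_tau supported in [p, q]: multiplying u by a conjugate of u^-1 supported left of
   [p, q] (and v by one right of it) yields elements of F_tau' with the same commutator. These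
   commutators even lie in every F_tau-conjugate of N, as conjugation preserves compact support.
   Finally every element of F_tau is an element of the abelian group generated by the bumps on
   [0, tau] and [tau, 1], matching its slopes at 0 and 1, times a compactly supported element, and a
   commutator identity reduces every [a, b] with a, b in F_tau to the compactly supported case. *)

section \<open>Supports and commutators of bijections\<close>

(* Plain inv denotes the group inverse of HOL-Algebra, so the inverse function gets its own name. *)
abbreviation finv :: "('a \<Rightarrow> 'a) \<Rightarrow> 'a \<Rightarrow> 'a" where "finv \<equiv> inv_into UNIV"

lemma bij_finv_apply [simp]:
  assumes "bij f"
  shows "f (finv f x) = x" "finv f (f x) = x"
  using assms by (simp_all add: bij_is_surj surj_f_inv_f bij_is_inj)

definition supported_in :: "'a set \<Rightarrow> ('a \<Rightarrow> 'a) \<Rightarrow> bool" where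
  "supported_in S f \<longleftrightarrow> (\<forall>x. x \<notin> S \<longrightarrow> f x = x)"

lemma supported_inD: "supported_in S f \<Longrightarrow> x \<notin> S \<Longrightarrow> f x = x"
  unfolding supported_in_def by blast

lemma supported_in_mono: "supported_in S f \<Longrightarrow> S \<subseteq> T \<Longrightarrow> supported_in T f"
  unfolding supported_in_def by blast

lemma supported_in_id: "supported_in S id"
  unfolding supported_in_def by simp

lemma supported_in_comp: "supported_in S f \<Longrightarrow> supported_in S g \<Longrightarrow> supported_in S (f \<circ> g)"
  unfolding supported_in_def by simp

lemma supported_in_funpow: "supported_in S f \<Longrightarrow> supported_in S (f ^^ n)"
  by (induction n) (simp_all add: supported_in_id supported_in_comp)

lemma supported_in_inv: "inj f \<Longrightarrow> supported_in S f \<Longrightarrow> supported_in S (finv f)"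
  unfolding supported_in_def by (metis inv_f_f)

lemma supported_in_mem: "inj f \<Longrightarrow> supported_in S f \<Longrightarrow> x \<in> S \<Longrightarrow> f x \<in> S"
  unfolding supported_in_def by (metis injD)

lemma supported_in_conj:
  assumes "surj c" "supported_in S f"
  shows "supported_in (c ` S) (c \<circ> f \<circ> finv c)"
  unfolding supported_in_def
proof (intro allI impI)
  fix x assume x: "x \<notin> c ` S"
  have cx: "c (finv c x) = x" using assms(1) by (rule surj_f_inv_f)
  then have "finv c x \<notin> S" using x by (metis imageI)
  then show "(c \<circ> f \<circ> finv c) x = x" using cx by (simp add: supported_inD[OF assms(2)])
qed

lemma supported_in_disjoint_commute:
  assumes "inj f" "inj g" "supported_in S f" "supported_in T g" "S \<inter> T = {}"
  shows "f \<circ> g = g \<circ> f"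
proof
  fix x
  show "(f \<circ> g) x = (g \<circ> f) x"
  proof (cases "x \<in> S")
    case True
    then have "x \<notin> T" "f x \<notin> T" using supported_in_mem[OF assms(1,3)] assms(5) by blast+
    then show ?thesis by (simp add: supported_inD[OF assms(4)])
  next
    case False
    show ?thesis
    proof (cases "x \<in> T")
      case True
      then have "g x \<notin> S" using supported_in_mem[OF assms(2,4)] assms(5) by blast
      then show ?thesis using False by (simp add: supported_inD[OF assms(3)])
    qed (use False in \<open>simp add: supported_inD[OF assms(3)] supported_inD[OF assms(4)]\<close>)
  qed
qed

lemma bij_if_bij_betw_supported_in:
  assumes "bij_betw f S S" "supported_in S f"
  shows "bij f"
proof -
  have mem: "f x \<in> S \<longleftrightarrow> x \<in> S" for x
    using bij_betwE[OF assms(1)] supported_inD[OF assms(2), of x] by (cases "x \<in> S") auto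
  have "inj f"
  proof (rule injI)
    fix x y assume eq: "f x = f y"
    show "x = y"
    proof (cases "x \<in> S")
      case True
      then have "y \<in> S" using mem eq by metis
      then show ?thesis using True eq assms(1) unfolding bij_betw_def inj_on_def by blast
    next
      case False
      then have "y \<notin> S" using mem eq by metis
      then show ?thesis using False eq supported_inD[OF assms(2)] by metis
    qed
  qed
  moreover have "y \<in> range f" for y
  proof (cases "y \<in> S")
    case True
    then show ?thesis using bij_betw_imp_surj_on[OF assms(1)] by blast
  next
    case False
    then show ?thesis using supported_inD[OF assms(2) False] by (metis rangeI)
  qed
  ultimately show ?thesis unfolding bij_def by blast
qed

lemma funpow_commute:
  assumes "f \<circ> g = g \<circ> f"
  shows "f ^^ n \<circ> g ^^ m = g ^^ m \<circ> f ^^ n"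
proof -
  have "f (g x) = g (f x)" for x using assms by (metis comp_apply)
  then have "(f ^^ n) (g x) = g ((f ^^ n) x)" for x by (induction n arbitrary: x) auto
  then have "(f ^^ n) ((g ^^ m) x) = (g ^^ m) ((f ^^ n) x)" for x by (induction m arbitrary: x) auto
  then show ?thesis by (simp add: fun_eq_iff)
qed

definition funpow_int :: "('a \<Rightarrow> 'a) \<Rightarrow> int \<Rightarrow> 'a \<Rightarrow> 'a" where
  "funpow_int f k = (if 0 \<le> k then f ^^ nat k else finv f ^^ nat (- k))"

lemma funpow_int_hom:
  assumes id: "P id 0" and comp: "\<And>g k h j. P g k \<Longrightarrow> P h j \<Longrightarrow> P (g \<circ> h) (k + j)"
    and f: "P f k" and inv: "P (finv f) (- k)"
  shows "P (funpow_int f j) (j * k)"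
proof -
  have funpow: "P (g ^^ n) (int n * i)" if "P g i" for g i n
  proof (induction n)
    case (Suc n)
    have "P (g \<circ> g ^^ n) (i + int n * i)" using comp[OF that Suc] .
    moreover have "i + int n * i = int (Suc n) * i" by (simp add: algebra_simps)
    ultimately show ?case by (metis funpow.simps(2))
  qed (use id in \<open>simp add: id_def\<close>)
  show ?thesis
    using funpow[OF f, of "nat j"] funpow[OF inv, of "nat (- j)"] unfolding funpow_int_def
    by (cases "0 \<le> j") simp_all
qed

lemma bij_funpow_int: "bij f \<Longrightarrow> bij (funpow_int f k)"
  using funpow_int_hom[where P = "\<lambda>g _. bij g" and f = f and k = 0 and j = k]
  by (simp add: bij_comp bij_imp_bij_inv)

lemma supported_in_funpow_int: "inj f \<Longrightarrow> supported_in S f \<Longrightarrow> supported_in S (funpow_int f k)"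
  using funpow_int_hom[where P = "\<lambda>g _. supported_in S g" and f = f and k = 0 and j = k]
  by (simp add: supported_in_id supported_in_comp supported_in_inv)

lemma funpow_int_commute:
  assumes "bij f"
  shows "funpow_int f i \<circ> funpow_int f j = funpow_int f j \<circ> funpow_int f i"
proof -
  have c: "f \<circ> finv f = finv f \<circ> f"
    using assms by (simp add: fun_eq_iff)
  have "g ^^ n \<circ> h ^^ m = h ^^ m \<circ> g ^^ n" if "g = f \<or> g = finv f" "h = f \<or> h = finv f" for g h n m
    using that funpow_commute[OF c] funpow_commute[OF c[symmetric]] funpow_commute[of g g] by auto
  then show ?thesis unfolding funpow_int_def by auto
qed

definition commutator :: "('a \<Rightarrow> 'a) \<Rightarrow> ('a \<Rightarrow> 'a) \<Rightarrow> 'a \<Rightarrow> 'a" where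
  "commutator f g = f \<circ> g \<circ> finv f \<circ> finv g"

lemma inv_commutator:
  assumes "bij f" "bij g"
  shows "finv (commutator f g) = commutator g f"
  by (rule inv_unique_comp) (simp_all add: commutator_def fun_eq_iff assms)

lemma conj_comp:
  assumes "bij c"
  shows "c \<circ> (f \<circ> g) \<circ> finv c = (c \<circ> f \<circ> finv c) \<circ> (c \<circ> g \<circ> finv c)"
  by (simp add: fun_eq_iff assms)

lemma conj_inv:
  assumes "bij c" "bij f"
  shows "finv (c \<circ> f \<circ> finv c) = c \<circ> finv f \<circ> finv c"
  by (rule inv_unique_comp) (simp_all add: fun_eq_iff assms)

lemma conj_conj:
  assumes "bij c" "bij d"
  shows "d \<circ> (c \<circ> f \<circ> finv c) \<circ> finv d = (d \<circ> c) \<circ> f \<circ> finv (d \<circ> c)"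
  using assms by (simp add: o_inv_distrib o_assoc)

lemma conj_commutator:
  assumes "bij c" "bij f" "bij g"
  shows "c \<circ> commutator f g \<circ> finv c = commutator (c \<circ> f \<circ> finv c) (c \<circ> g \<circ> finv c)"
  unfolding commutator_def conj_inv[OF assms(1,2)] conj_inv[OF assms(1,3)]
  by (simp add: fun_eq_iff assms)

lemma commutator_comp_commuting:
  assumes "bij f" "bij z" "z \<circ> g = g \<circ> z"
  shows "commutator (f \<circ> z) g = commutator f g"
proof -
  have "z (g (finv z x)) = g x" for x
    using fun_cong[OF assms(3), of "finv z x"] assms(2) by simp
  then show ?thesis unfolding commutator_def o_inv_distrib[OF assms(1,2)]
    by (simp add: fun_eq_iff)
qed

lemma commutator_comp_comp:
  assumes "bij \<alpha>" "bij \<beta>" "bij a" "bij b" "\<alpha> \<circ> \<beta> = \<beta> \<circ> \<alpha>"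
  shows "commutator (\<alpha> \<circ> a) (\<beta> \<circ> b) =
    (\<alpha> \<circ> (commutator a \<beta> \<circ> (\<beta> \<circ> commutator a b \<circ> finv \<beta>)) \<circ> finv \<alpha>) \<circ>
    (\<beta> \<circ> commutator \<alpha> b \<circ> finv \<beta>)"
proof -
  have "finv \<beta> (finv \<alpha> (\<beta> (\<alpha> x))) = x" for x
    using fun_cong[OF assms(5), of x] assms(1,2) by (metis bij_finv_apply(2) comp_apply)
  then show ?thesis unfolding commutator_def o_inv_distrib[OF assms(1,3)] o_inv_distrib[OF assms(2,4)]
    by (simp add: fun_eq_iff assms(1-4))
qed

lemma commutator_comp_comp_commuting:
  assumes "bij u" "bij v" "bij w1" "bij w2"
    and "w1 \<circ> (v \<circ> w2) = (v \<circ> w2) \<circ> w1" "w2 \<circ> u = u \<circ> w2"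
  shows "commutator (u \<circ> w1) (v \<circ> w2) = commutator u v"
proof -
  have vw2: "bij (v \<circ> w2)" using assms(2,4) by (rule bij_comp[rotated])
  have "commutator (u \<circ> w1) (v \<circ> w2) = commutator u (v \<circ> w2)"
    using assms(5) by (rule commutator_comp_commuting[OF assms(1,3)])
  also have "\<dots> = finv (commutator (v \<circ> w2) u)" using inv_commutator[OF vw2 assms(1)] by simp
  also have "commutator (v \<circ> w2) u = commutator v u"
    using assms(6) by (rule commutator_comp_commuting[OF assms(2,4)])
  also have "finv (commutator v u) = commutator u v" using inv_commutator[OF assms(2,1)] .
  finally show ?thesis .
qed

lemma commutator_agrees_off_image:
  assumes "bij k" "inj u" "supported_in S u" "t \<notin> k ` S"
  shows "commutator u k t = u t"
proof -
  have "supported_in (k ` S) (k \<circ> finv u \<circ> finv k)"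
    using supported_in_conj[OF bij_is_surj supported_in_inv] assms(1-3) by blast
  then have "(k \<circ> finv u \<circ> finv k) t = t" using assms(4) by (rule supported_inD)
  then show ?thesis unfolding commutator_def by simp
qed

lemma conj_eq_if_agree_on_support:
  assumes "bij \<beta>" "bij s" "inj c" "supported_in S c" "\<forall>t\<in>S. s t = \<beta> t"
  shows "\<beta> \<circ> c \<circ> finv \<beta> = s \<circ> c \<circ> finv s"
proof
  fix y
  define x where "x = finv \<beta> y"
  define x' where "x' = finv s y"
  have \<beta>x: "\<beta> x = y" and sx': "s x' = y" unfolding x_def x'_def using assms(1,2) by simp_all
  show "(\<beta> \<circ> c \<circ> finv \<beta>) y = (s \<circ> c \<circ> finv s) y"
  proof (cases "x \<in> S")
    case True
    then have "s x = y" using assms(5) \<beta>x by simp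
    then have "x' = x" unfolding x'_def by (simp add: assms(2) flip: \<open>s x = y\<close>)
    have "c x \<in> S" using supported_in_mem[OF assms(3,4) True] .
    then have "(s \<circ> c \<circ> finv s) y = \<beta> (c x)"
      using assms(5) \<open>x' = x\<close> unfolding x'_def by simp
    then show ?thesis unfolding x_def by simp
  next
    case False
    have "x' \<notin> S"
    proof
      assume "x' \<in> S"
      then have "\<beta> x' = y" using assms(5) sx' by simp
      then have "x = x'" unfolding x_def by (simp add: assms(1) flip: \<open>\<beta> x' = y\<close>)
      then show False using False \<open>x' \<in> S\<close> by simp
    qed
    then have "(s \<circ> c \<circ> finv s) y = y" using sx' unfolding x'_def by (simp add: supported_inD[OF assms(4)])
    moreover have "(\<beta> \<circ> c \<circ> finv \<beta>) y = y" using False \<beta>x unfolding x_def by (simp add: supported_inD[OF assms(4)])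
    ultimately show ?thesis by simp
  qed
qed

section \<open>The ring \<open>\<int>[\<tau>]\<close>\<close>

lemma tau_pos: "0 < tau"
  unfolding tau_def by (simp add: real_less_rsqrt)

lemma tau_neq_0 [simp]: "tau \<noteq> 0"
  using tau_pos by simp

lemma tau_less_1: "tau < 1"
proof -
  have "sqrt 5 < 3" by (rule real_less_lsqrt) auto
  then show ?thesis unfolding tau_def by simp
qed

lemma tau_squared: "tau * tau = 1 - tau"
  unfolding tau_def by (simp add: field_simps)

lemma tau_powi_pos: "0 < tau powi k"
  using tau_pos by simp

lemma tau_powi_minus_1: "tau powi (-1) = 1 + tau"
  using tau_squared tau_pos by (simp add: field_simps)

lemma Ztau_iff: "x \<in> Ztau \<longleftrightarrow> (\<exists>a b::int. x = of_int a + of_int b * tau)"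
  unfolding Ztau_def by auto

lemma Ztau_of_int: "of_int a \<in> Ztau"
  unfolding Ztau_iff by (rule exI[of _ a], rule exI[of _ 0]) simp

lemma Ztau_0 [simp]: "0 \<in> Ztau" and Ztau_1 [simp]: "1 \<in> Ztau"
  using Ztau_of_int[of 0] Ztau_of_int[of 1] by simp_all

lemma tau_in_Ztau [simp]: "tau \<in> Ztau"
  unfolding Ztau_iff by (rule exI[of _ 0], rule exI[of _ 1]) simp

lemma Ztau_add:
  assumes "x \<in> Ztau" "y \<in> Ztau"
  shows "x + y \<in> Ztau"
proof -
  obtain a b c d where "x = of_int a + of_int b * tau" and "y = of_int c + of_int d * tau"
    using assms unfolding Ztau_iff by auto
  then have "x + y = of_int (a + c) + of_int (b + d) * tau" by (simp add: algebra_simps)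
  then show ?thesis unfolding Ztau_iff by blast
qed

lemma Ztau_uminus:
  assumes "x \<in> Ztau"
  shows "- x \<in> Ztau"
proof -
  obtain a b where "x = of_int a + of_int b * tau" using assms unfolding Ztau_iff by auto
  then have "- x = of_int (- a) + of_int (- b) * tau" by simp
  then show ?thesis unfolding Ztau_iff by blast
qed

lemma Ztau_diff: "x \<in> Ztau \<Longrightarrow> y \<in> Ztau \<Longrightarrow> x - y \<in> Ztau"
  using Ztau_add Ztau_uminus by (metis diff_conv_add_uminus)

lemma Ztau_mult:
  assumes "x \<in> Ztau" "y \<in> Ztau"
  shows "x * y \<in> Ztau"
proof -
  obtain a b c d where x: "x = of_int a + of_int b * tau" and y: "y = of_int c + of_int d * tau"
    using assms unfolding Ztau_iff by auto
  have sq: "tau * (tau * z) = z - tau * z" for z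
    using tau_squared by (metis mult.assoc left_diff_distrib mult_1)
  have "x * y = of_int (a * c + b * d) + of_int (a * d + b * c - b * d) * tau"
    unfolding x y by (simp add: algebra_simps sq)
  then show ?thesis unfolding Ztau_iff by blast
qed

lemma tau_powi_in_Ztau: "tau powi k \<in> Ztau"
proof -
  have inverse_tau: "inverse tau \<in> Ztau"
    using tau_powi_minus_1 Ztau_add by (simp add: power_int_minus)
  have "tau ^ n \<in> Ztau" "inverse tau ^ n \<in> Ztau" for n
    by (induction n) (auto intro: Ztau_mult inverse_tau)
  then show ?thesis by (simp add: power_int_def power_inverse)
qed

lemma Ztau_mult_powi_iff: "tau powi k * x \<in> Ztau \<longleftrightarrow> x \<in> Ztau"
proof
  assume "tau powi k * x \<in> Ztau"
  then have "tau powi (- k) * (tau powi k * x) \<in> Ztau" using Ztau_mult tau_powi_in_Ztau by blast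
  moreover have "tau powi (- k) * (tau powi k * x) = x"
    using tau_pos by (simp add: power_int_minus field_simps)
  ultimately show "x \<in> Ztau" by simp
qed (rule Ztau_mult[OF tau_powi_in_Ztau])

lemma Ztau_dense:
  assumes "a < b"
  shows "\<exists>z\<in>Ztau. a < z \<and> z < b"
proof -
  have "(\<lambda>n. tau ^ n) \<longlonglongrightarrow> 0" using tau_pos tau_less_1 by (intro LIMSEQ_realpow_zero) auto
  then obtain n where n: "tau ^ n < b - a"
    using assms by (metis diff_gt_0_iff_gt eventually_sequentially order_refl order_tendstoD(2))
  define e where "e = tau ^ n"
  have e: "0 < e" "e < b - a" using n tau_pos by (auto simp: e_def)
  define m where "m = \<lfloor>a / e\<rfloor> + 1"
  have "a / e < m" "m - 1 \<le> a / e" unfolding m_def by linarith+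
  then have "a < m * e" "(m - 1) * e \<le> a" using e by (simp_all add: field_simps)
  then have "a < m * e" "m * e < b" using e by (simp_all add: algebra_simps)
  moreover have "of_int m * e \<in> Ztau"
    using Ztau_mult Ztau_of_int tau_powi_in_Ztau[of "int n"] by (simp add: e_def)
  ultimately show ?thesis by blast
qed

section \<open>Breakpoint sets and the group \<open>F\<^sub>\<tau>\<close>\<close>

lemma finite_gap_around_right:
  fixes B :: "'a::linorder set"
  assumes "finite B" "y \<in> B" "y \<le> x" "z \<in> B" "x < z"
  shows "\<exists>a\<in>B. \<exists>b\<in>B. a \<le> x \<and> x < b \<and> B \<inter> {a<..<b} = {}"
proof -
  define a where "a = Max {t\<in>B. t \<le> x}"
  define b where "b = Min {t\<in>B. x < t}"
  have fin: "finite {t\<in>B. t \<le> x}" "finite {t\<in>B. x < t}" using assms(1) by auto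
  have a: "a \<in> B" "a \<le> x" "\<And>t. t \<in> B \<Longrightarrow> t \<le> x \<Longrightarrow> t \<le> a"
    unfolding a_def using Max_in[OF fin(1)] Max_ge[OF fin(1)] assms(2,3) by blast+
  have b: "b \<in> B" "x < b" "\<And>t. t \<in> B \<Longrightarrow> x < t \<Longrightarrow> b \<le> t"
    unfolding b_def using Min_in[OF fin(2)] Min_le[OF fin(2)] assms(4,5) by blast+
  have "B \<inter> {a<..<b} = {}" using a(3) b(3) by (force simp: not_le)
  then show ?thesis using a b by blast
qed

lemma finite_gap_around_left:
  fixes B :: "'a::linorder set"
  assumes "finite B" "y \<in> B" "y < x" "z \<in> B" "x \<le> z"
  shows "\<exists>a\<in>B. \<exists>b\<in>B. a < x \<and> x \<le> b \<and> B \<inter> {a<..<b} = {}"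
proof -
  define a where "a = Max {t\<in>B. t < x}"
  define b where "b = Min {t\<in>B. x \<le> t}"
  have fin: "finite {t\<in>B. t < x}" "finite {t\<in>B. x \<le> t}" using assms(1) by auto
  have a: "a \<in> B" "a < x" "\<And>t. t \<in> B \<Longrightarrow> t < x \<Longrightarrow> t \<le> a"
    unfolding a_def using Max_in[OF fin(1)] Max_ge[OF fin(1)] assms(2,3) by blast+
  have b: "b \<in> B" "x \<le> b" "\<And>t. t \<in> B \<Longrightarrow> x \<le> t \<Longrightarrow> b \<le> t"
    unfolding b_def using Min_in[OF fin(2)] Min_le[OF fin(2)] assms(4,5) by blast+
  have "B \<inter> {a<..<b} = {}" using a(3) b(3) by (force simp: not_le)
  then show ?thesis using a b by blast
qed

lemma sorted_hd_le_le_last: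
  assumes "sorted xs" "y \<in> set xs"
  shows "hd xs \<le> y \<and> y \<le> last xs"
proof -
  obtain j where j: "j < length xs" "xs ! j = y" using assms(2) by (metis in_set_conv_nth)
  then have "xs \<noteq> []" by auto
  then show ?thesis
    using j sorted_nth_mono[OF assms(1), of 0 j] sorted_nth_mono[OF assms(1), of j "length xs - 1"]
    by (simp add: hd_conv_nth last_conv_nth)
qed

lemma strict_sorted_consecutive_gap:
  fixes xs :: "'a::linorder list"
  assumes "sorted_wrt (<) xs" "Suc i < length xs"
  shows "set xs \<inter> {xs ! i<..<xs ! Suc i} = {}"
proof (rule ccontr)
  assume "set xs \<inter> {xs ! i<..<xs ! Suc i} \<noteq> {}"
  then obtain j where j: "j < length xs" "xs ! i < xs ! j" "xs ! j < xs ! Suc i"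
    by (auto simp: in_set_conv_nth)
  have sorted: "sorted xs" using assms(1) by (rule strict_sorted_imp_sorted)
  show False
  proof (cases "j \<le> i")
    case True
    then have "xs ! j \<le> xs ! i" using sorted_nth_mono[OF sorted, of j i] assms(2) by simp
    then show False using j(2) by (simp add: not_le[symmetric])
  next
    case False
    then have "xs ! Suc i \<le> xs ! j" using sorted_nth_mono[OF sorted, of "Suc i" j] j(1) by simp
    then show False using j(3) by (simp add: not_le[symmetric])
  qed
qed

lemma strict_sorted_gap_within_consecutive:
  fixes xs :: "'a::linorder list"
  assumes xs: "sorted_wrt (<) xs" "xs \<noteq> []" and ab: "hd xs \<le> a" "a < b" "b \<le> last xs"
    and gap: "set xs \<inter> {a<..<b} = {}"
  shows "\<exists>i. Suc i < length xs \<and> xs ! i \<le> a \<and> b \<le> xs ! Suc i"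
proof -
  define J where "J = {j. j < length xs \<and> xs ! j \<le> a}"
  define i where "i = Max J"
  have "finite J" "0 \<in> J" unfolding J_def using xs ab by (simp_all add: hd_conv_nth)
  then have i: "i \<in> J" "\<And>j. j \<in> J \<Longrightarrow> j \<le> i" unfolding i_def using Max_in Max_ge by blast+
  have "Suc i < length xs"
  proof (rule ccontr)
    assume "\<not> Suc i < length xs"
    moreover have "i < length xs" using i(1) unfolding J_def by simp
    ultimately have "i = length xs - 1" by arith
    then have "last xs \<le> a" using xs(2) i(1) unfolding J_def by (simp add: last_conv_nth)
    then have "last xs < b" using ab(2) by (rule le_less_trans)
    then show False using ab(3) by (simp add: not_le[symmetric])
  qed
  moreover have "a < xs ! Suc i"
  proof -
    have "Suc i \<notin> J" using i(2)[of "Suc i"] by auto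
    then show ?thesis using calculation unfolding J_def by (simp add: not_le)
  qed
  moreover have "\<not> xs ! Suc i < b" using calculation gap by (metis nth_mem disjoint_iff greaterThanLessThan_iff)
  ultimately show ?thesis using i(1) unfolding J_def by (auto simp: not_less)
qed

definition tau_affine_on :: "real set \<Rightarrow> (real \<Rightarrow> real) \<Rightarrow> bool" where
  "tau_affine_on S f \<longleftrightarrow> (\<exists>(k::int) c. \<forall>x\<in>S. f x = tau powi k * x + c)"

lemma tau_affine_on_subset: "tau_affine_on T f \<Longrightarrow> S \<subseteq> T \<Longrightarrow> tau_affine_on S f"
  unfolding tau_affine_on_def by blast

lemma tau_affine_on_comp:
  assumes "tau_affine_on T f" "tau_affine_on S g" "g ` S \<subseteq> T"
  shows "tau_affine_on S (f \<circ> g)"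
proof -
  obtain k c l d where f: "\<forall>x\<in>T. f x = tau powi k * x + c" and g: "\<forall>x\<in>S. g x = tau powi l * x + d"
    using assms(1,2) unfolding tau_affine_on_def by blast
  have "(f \<circ> g) x = tau powi (k + l) * x + (tau powi k * d + c)" if "x \<in> S" for x
  proof -
    have "g x \<in> T" using that assms(3) by blast
    then have "(f \<circ> g) x = tau powi k * (tau powi l * x + d) + c" using that f g by simp
    then show ?thesis by (simp add: power_int_add algebra_simps)
  qed
  then show ?thesis unfolding tau_affine_on_def by blast
qed

lemma tau_affine_on_inverse:
  assumes "tau_affine_on S f" "\<And>y. y \<in> T \<Longrightarrow> h y \<in> S \<and> f (h y) = y"
  shows "tau_affine_on T h"
proof -
  obtain k c where f: "\<forall>x\<in>S. f x = tau powi k * x + c" using assms(1) unfolding tau_affine_on_def by blast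
  have "h y = tau powi (- k) * y + (- (tau powi (- k) * c))" if "y \<in> T" for y
  proof -
    have "y - c = tau powi k * h y" using f assms(2)[OF that] by force
    then have "tau powi (- k) * (y - c) = h y" using tau_pos by (simp add: power_int_minus)
    then show ?thesis by (simp add: algebra_simps)
  qed
  then show ?thesis unfolding tau_affine_on_def by blast
qed

(* A set-based variant of the breakpoint lists in Ftau_set_def: unlike sorted lists, such sets can
   simply be merged when maps are composed. *)
definition breakpoint_set :: "(real \<Rightarrow> real) \<Rightarrow> real set \<Rightarrow> bool" where
  "breakpoint_set f B \<longleftrightarrow> finite B \<and> B \<subseteq> Ztau \<inter> {0..1} \<and> 0 \<in> B \<and> 1 \<in> B \<and>
     (\<forall>a b. 0 \<le> a \<longrightarrow> a < b \<longrightarrow> b \<le> 1 \<longrightarrow> B \<inter> {a<..<b} = {} \<longrightarrow> tau_affine_on {a..b} f)"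

lemma breakpoint_setD:
  assumes "breakpoint_set f B"
  shows "finite B" "B \<subseteq> Ztau" "B \<subseteq> {0..1}" "0 \<in> B" "1 \<in> B"
    "\<And>a b. 0 \<le> a \<Longrightarrow> a < b \<Longrightarrow> b \<le> 1 \<Longrightarrow> B \<inter> {a<..<b} = {} \<Longrightarrow> tau_affine_on {a..b} f"
  using assms unfolding breakpoint_set_def by auto

lemma breakpoint_set_gap_right:
  assumes "breakpoint_set f B" "0 \<le> x" "x < 1"
  shows "\<exists>a\<in>B. \<exists>b\<in>B. a \<le> x \<and> x < b \<and> B \<inter> {a<..<b} = {}"
  using finite_gap_around_right breakpoint_setD(1,4,5)[OF assms(1)] assms(2,3) by blast

lemma breakpoint_set_gap_left:
  assumes "breakpoint_set f B" "0 < x" "x \<le> 1"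
  shows "\<exists>a\<in>B. \<exists>b\<in>B. a < x \<and> x \<le> b \<and> B \<inter> {a<..<b} = {}"
  using finite_gap_around_left breakpoint_setD(1,4,5)[OF assms(1)] assms(2,3) by blast

lemma breakpoint_set_gap_containing:
  assumes B: "breakpoint_set f B" and x: "x \<in> {0..1}"
  shows "\<exists>a\<in>B. \<exists>b\<in>B. a \<le> x \<and> x \<le> b \<and> a < b \<and> B \<inter> {a<..<b} = {}"
proof (cases "x < 1")
  case True
  then obtain a b where "a \<in> B" "b \<in> B" "a \<le> x" "x < b" "B \<inter> {a<..<b} = {}"
    using breakpoint_set_gap_right[OF B, of x] x by auto
  then show ?thesis by (intro bexI[of _ a] bexI[of _ b]) auto
next
  case False
  then obtain a b where "a \<in> B" "b \<in> B" "a < x" "x \<le> b" "B \<inter> {a<..<b} = {}"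
    using breakpoint_set_gap_left[OF B, of x] x by auto
  then show ?thesis by (intro bexI[of _ a] bexI[of _ b]) auto
qed

lemma breakpoint_set_strict_mono:
  assumes B: "breakpoint_set f B"
  shows "strict_mono_on {0..1} f"
proof -
  have "f x < f y" if "x \<in> {0..1}" "y \<in> {0..1}" "x < y" for x y
    using that
  proof (induction "card (B \<inter> {x<..<y})" arbitrary: x y rule: less_induct)
    case (less x y)
    show ?case
    proof (cases "B \<inter> {x<..<y} = {}")
      case True
      then obtain k c where "\<forall>t\<in>{x..y}. f t = tau powi k * t + c"
        using breakpoint_setD(6)[OF B, of x y] less.prems unfolding tau_affine_on_def by auto
      then show ?thesis using less.prems tau_powi_pos[of k] by simp
    next
      case False
      then obtain z where z: "z \<in> B" "x < z" "z < y" by auto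
      have fin: "finite (B \<inter> {x<..<y})" using breakpoint_setD(1)[OF B] by simp
      have "card (B \<inter> {x<..<z}) < card (B \<inter> {x<..<y})" "card (B \<inter> {z<..<y}) < card (B \<inter> {x<..<y})"
        by (rule psubset_card_mono[OF fin]; use z in auto)+
      then have "f x < f z" "f z < f y" using less z by auto
      then show ?thesis by simp
    qed
  qed
  then show ?thesis by (auto intro: strict_mono_onI)
qed

lemma breakpoint_set_continuous_on:
  assumes B: "breakpoint_set f B"
  shows "continuous_on {0..1} f"
proof -
  define I where "I = {(a, b). a \<in> B \<and> b \<in> B \<and> a < b \<and> B \<inter> {a<..<b} = {}}"
  have "finite I" by (rule finite_subset[of I "B \<times> B"]) (auto simp: I_def breakpoint_setD(1)[OF B])
  moreover have "continuous_on {fst i..snd i} f" if "i \<in> I" for i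
  proof -
    obtain a b where i: "i = (a, b)" by fastforce
    then have ab: "a \<in> B" "b \<in> B" "a < b" "B \<inter> {a<..<b} = {}" using that unfolding I_def by auto
    moreover have "0 \<le> a" "b \<le> 1" using ab(1,2) breakpoint_setD(3)[OF B] by auto
    ultimately have "tau_affine_on {a..b} f" using breakpoint_setD(6)[OF B] by blast
    then obtain k c where "\<forall>x\<in>{a..b}. f x = tau powi k * x + c" unfolding tau_affine_on_def by auto
    moreover have "continuous_on {a..b} (\<lambda>x. tau powi k * x + c)" by (intro continuous_intros)
    ultimately show ?thesis using i continuous_on_cong by fastforce
  qed
  ultimately have "continuous_on (\<Union>i\<in>I. {fst i..snd i}) f" by (intro continuous_on_closed_Union) auto
  moreover have "(\<Union>i\<in>I. {fst i..snd i}) = {0..1}"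
  proof
    show "(\<Union>i\<in>I. {fst i..snd i}) \<subseteq> {0..1}" using breakpoint_setD(3)[OF B] by (force simp: I_def)
    show "{0..1} \<subseteq> (\<Union>i\<in>I. {fst i..snd i})"
    proof
      fix x :: real assume x: "x \<in> {0..1}"
      then have "\<exists>a\<in>B. \<exists>b\<in>B. a \<le> x \<and> x \<le> b \<and> a < b \<and> B \<inter> {a<..<b} = {}"
        by (rule breakpoint_set_gap_containing[OF B])
      then obtain a b where "a \<in> B" "b \<in> B" "a \<le> x" "x \<le> b" "a < b" "B \<inter> {a<..<b} = {}"
        by blast
      then show "x \<in> (\<Union>i\<in>I. {fst i..snd i})" unfolding I_def by (intro UN_I[of "(a, b)"]) auto
    qed
  qed
  ultimately show ?thesis by simp
qed

lemma breakpoint_set_Ztau_iff: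
  assumes B: "breakpoint_set f B" and f0: "f 0 = 0"
  shows "x \<in> {0..1} \<Longrightarrow> f x \<in> Ztau \<longleftrightarrow> x \<in> Ztau"
proof (induction "card {y\<in>B. y < x}" arbitrary: x rule: less_induct)
  case (less x)
  show ?case
  proof (cases "x = 0")
    case False
    then obtain a b where ab: "a \<in> B" "b \<in> B" "a < x" "x \<le> b" "B \<inter> {a<..<b} = {}"
      using breakpoint_set_gap_left[OF B, of x] less.prems by auto
    have a01: "a \<in> {0..1}" "b \<le> 1" using ab(1,2) breakpoint_setD(3)[OF B] by auto
    obtain k c where "\<forall>t\<in>{a..b}. f t = tau powi k * t + c"
      using breakpoint_setD(6)[OF B, of a b] ab a01 unfolding tau_affine_on_def by auto
    then have fx: "f x = f a + tau powi k * (x - a)" using ab by (simp add: algebra_simps)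
    have "card {y\<in>B. y < a} < card {y\<in>B. y < x}"
      by (rule psubset_card_mono) (use ab breakpoint_setD(1)[OF B] in auto)
    then have "f a \<in> Ztau" using less.hyps a01 ab(1) breakpoint_setD(2)[OF B] by auto
    then have "f x \<in> Ztau \<longleftrightarrow> tau powi k * (x - a) \<in> Ztau"
      unfolding fx using Ztau_add Ztau_diff by (metis add_diff_cancel_left')
    also have "\<dots> \<longleftrightarrow> x \<in> Ztau"
      using Ztau_mult_powi_iff ab(1) breakpoint_setD(2)[OF B] Ztau_add Ztau_diff
      by (metis diff_add_cancel subsetD)
    finally show ?thesis .
  qed (simp add: f0)
qed

lemma breakpoint_set_of_list:
  assumes xs: "sorted_wrt (<) xs" "xs \<noteq> []" "hd xs = 0" "last xs = 1" "set xs \<subseteq> Ztau"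
    and pieces: "\<forall>i. Suc i < length xs \<longrightarrow> tau_affine_on {xs ! i..xs ! Suc i} f"
  shows "breakpoint_set f (set xs)"
  unfolding breakpoint_set_def
proof (intro conjI allI impI)
  have "hd xs \<le> y \<and> y \<le> last xs" if "y \<in> set xs" for y
    using sorted_hd_le_le_last[OF strict_sorted_imp_sorted[OF xs(1)] that] .
  then show "set xs \<subseteq> Ztau \<inter> {0..1}" using xs(3-5) by auto
  show "0 \<in> set xs" "1 \<in> set xs" using xs(2-4) hd_in_set last_in_set by metis+
  fix a b :: real assume ab: "0 \<le> a" "a < b" "b \<le> 1" "set xs \<inter> {a<..<b} = {}"
  then have "hd xs \<le> a" "b \<le> last xs" using xs(3,4) by simp_all
  then obtain i where i: "Suc i < length xs" "xs ! i \<le> a" "b \<le> xs ! Suc i"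
    using strict_sorted_gap_within_consecutive[OF xs(1,2) _ ab(2) _ ab(4)] by blast
  then have "{a..b} \<subseteq> {xs ! i..xs ! Suc i}" by auto
  then show "tau_affine_on {a..b} f" using pieces i(1) tau_affine_on_subset by blast
qed simp

lemma list_of_breakpoint_set:
  assumes B: "breakpoint_set f B"
  obtains xs where "sorted_wrt (<) xs" "xs \<noteq> []" "hd xs = 0" "last xs = 1" "set xs \<subseteq> Ztau"
    "\<forall>i. Suc i < length xs \<longrightarrow> tau_affine_on {xs ! i..xs ! Suc i} f"
proof
  define xs where "xs = sorted_list_of_set B"
  have set: "set xs = B" unfolding xs_def using breakpoint_setD(1)[OF B] by simp
  show sorted: "sorted_wrt (<) xs" unfolding xs_def by simp
  show ne: "xs \<noteq> []" using set breakpoint_setD(4)[OF B] by auto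
  have bounds: "hd xs \<le> y \<and> y \<le> last xs" if "y \<in> B" for y
    using sorted_hd_le_le_last[OF strict_sorted_imp_sorted[OF sorted]] that set by blast
  have "hd xs \<in> B" "last xs \<in> B" using ne set hd_in_set last_in_set by blast+
  then have "hd xs \<in> {0..1}" "last xs \<in> {0..1}" using breakpoint_setD(3)[OF B] by blast+
  moreover have "hd xs \<le> 0" "1 \<le> last xs" using bounds breakpoint_setD(4,5)[OF B] by blast+
  ultimately show "hd xs = 0" "last xs = 1" by simp_all
  show "set xs \<subseteq> Ztau" using set breakpoint_setD(2)[OF B] by simp
  show "\<forall>i. Suc i < length xs \<longrightarrow> tau_affine_on {xs ! i..xs ! Suc i} f"
  proof (intro allI impI)
    fix i assume i: "Suc i < length xs"
    have "xs ! i \<in> B" "xs ! Suc i \<in> B" using i set nth_mem[of i xs] nth_mem[of "Suc i" xs] by simp_all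
    then have "0 \<le> xs ! i" "xs ! Suc i \<le> 1" using breakpoint_setD(3)[OF B] by auto
    moreover have "xs ! i < xs ! Suc i" using sorted_wrt_nth_less[OF sorted, of i "Suc i"] i by simp
    moreover have "B \<inter> {xs ! i<..<xs ! Suc i} = {}" using strict_sorted_consecutive_gap[OF sorted i] set by simp
    ultimately show "tau_affine_on {xs ! i..xs ! Suc i} f" using breakpoint_setD(6)[OF B] by blast
  qed
qed

lemma bij_betw_if_strict_mono_continuous_on:
  fixes f :: "real \<Rightarrow> real"
  assumes mono: "strict_mono_on {0..1} f" and cont: "continuous_on {0..1} f" and f01: "f 0 = 0" "f 1 = 1"
  shows "bij_betw f {0..1} {0..1}"
proof -
  have "f ` {0..1} = {0..1}"
  proof
    show "f ` {0..1} \<subseteq> {0..1}"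
    proof
      fix y assume "y \<in> f ` {0..1}"
      then obtain x where x: "x \<in> {0..1}" "y = f x" by blast
      then have "f 0 \<le> f x" "f x \<le> f 1"
        using strict_mono_on_less_eq[OF mono, of 0 x] strict_mono_on_less_eq[OF mono, of x 1] by auto
      then show "y \<in> {0..1}" using x f01 by simp
    qed
    show "{0..1} \<subseteq> f ` {0..1}"
    proof
      fix y :: real assume "y \<in> {0..1}"
      then obtain x where "x \<in> {0..1}" "f x = y" using IVT'[of f 0 y 1] cont f01 by auto
      then show "y \<in> f ` {0..1}" by blast
    qed
  qed
  then show ?thesis unfolding bij_betw_def using strict_mono_on_imp_inj_on[OF mono] by blast
qed

lemma Ftau_setD:
  assumes "f \<in> Ftau_set"
  shows "supported_in {0..1} f" "bij_betw f {0..1} {0..1}" "continuous_on {0..1} f"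
    "strict_mono_on {0..1} f"
  using assms unfolding Ftau_set_def supported_in_def by auto

lemma Ftau_endpoints:
  assumes "f \<in> Ftau_set"
  shows "f 0 = 0" "f 1 = 1"
proof -
  have b: "bij_betw f {0..1} {0..1}" and m: "strict_mono_on {0..1} f" using Ftau_setD[OF assms] by auto
  have "0 \<in> f ` {0..1}" "1 \<in> f ` {0..1}" using bij_betw_imp_surj_on[OF b] by auto
  then obtain x y where x: "x \<in> {0..1}" "f x = 0" and y: "y \<in> {0..1}" "f y = 1"
    by (metis imageE)
  have "f 0 \<in> {0..1}" "f 1 \<in> {0..1}" using bij_betwE[OF b] by auto
  then have "f x \<le> f 0" "f 1 \<le> f y" using x y by simp_all
  then have "x \<le> 0" "1 \<le> y"
    using strict_mono_on_less_eq[OF m, of x 0] strict_mono_on_less_eq[OF m, of 1 y] x y by auto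
  then show "f 0 = 0" "f 1 = 1" using x y by simp_all
qed

lemma Ftau_set_iff:
  "f \<in> Ftau_set \<longleftrightarrow> supported_in {0..1} f \<and> f 0 = 0 \<and> f 1 = 1 \<and> (\<exists>B. breakpoint_set f B)"
proof
  assume f: "f \<in> Ftau_set"
  then obtain xs where "sorted_wrt (<) xs" "xs \<noteq> []" "hd xs = 0" "last xs = 1" "set xs \<subseteq> Ztau"
    "\<forall>i. Suc i < length xs \<longrightarrow> tau_affine_on {xs ! i..xs ! Suc i} f"
    unfolding Ftau_set_def tau_affine_on_def by blast
  then have "breakpoint_set f (set xs)" by (rule breakpoint_set_of_list)
  then show "supported_in {0..1} f \<and> f 0 = 0 \<and> f 1 = 1 \<and> (\<exists>B. breakpoint_set f B)"
    using Ftau_setD(1)[OF f] Ftau_endpoints[OF f] by blast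
next
  assume "supported_in {0..1} f \<and> f 0 = 0 \<and> f 1 = 1 \<and> (\<exists>B. breakpoint_set f B)"
  then obtain B where supp: "supported_in {0..1} f" and f01: "f 0 = 0" "f 1 = 1"
    and B: "breakpoint_set f B" by blast
  have mono: "strict_mono_on {0..1} f" by (rule breakpoint_set_strict_mono[OF B])
  have cont: "continuous_on {0..1} f" by (rule breakpoint_set_continuous_on[OF B])
  have "bij_betw f {0..1} {0..1}" by (rule bij_betw_if_strict_mono_continuous_on[OF mono cont f01])
  moreover obtain xs where "sorted_wrt (<) xs" "xs \<noteq> []" "hd xs = 0" "last xs = 1" "set xs \<subseteq> Ztau"
    "\<forall>i. Suc i < length xs \<longrightarrow> tau_affine_on {xs ! i..xs ! Suc i} f"
    using list_of_breakpoint_set[OF B] by blast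
  ultimately show "f \<in> Ftau_set"
    using supp cont mono unfolding Ftau_set_def supported_in_def tau_affine_on_def by blast
qed

lemma Ftau_setI:
  "supported_in {0..1} f \<Longrightarrow> f 0 = 0 \<Longrightarrow> f 1 = 1 \<Longrightarrow> breakpoint_set f B \<Longrightarrow> f \<in> Ftau_set"
  using Ftau_set_iff by blast

lemma Ftau_breakpoint_set: "f \<in> Ftau_set \<Longrightarrow> \<exists>B. breakpoint_set f B"
  using Ftau_set_iff by blast

lemma Ftau_bij: "f \<in> Ftau_set \<Longrightarrow> bij f"
  using bij_if_bij_betw_supported_in Ftau_setD(1,2) by blast

lemma Ftau_mem_01: "f \<in> Ftau_set \<Longrightarrow> x \<in> {0..1} \<Longrightarrow> f x \<in> {0..1}"
  using Ftau_setD(2) bij_betwE by blast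

lemma Ftau_finv_mem_01:
  assumes "f \<in> Ftau_set" "y \<in> {0..1}"
  shows "finv f y \<in> {0..1}"
proof -
  have "y \<in> f ` {0..1}" using bij_betw_imp_surj_on[OF Ftau_setD(2)[OF assms(1)]] assms(2) by simp
  then obtain x where "y = f x" "x \<in> {0..1}" by (rule imageE)
  then show ?thesis using Ftau_bij[OF assms(1)] by simp
qed

lemma Ftau_less_iff: "f \<in> Ftau_set \<Longrightarrow> x \<in> {0..1} \<Longrightarrow> y \<in> {0..1} \<Longrightarrow> f x < f y \<longleftrightarrow> x < y"
  using strict_mono_on_less Ftau_setD(4) by blast

lemma Ftau_le_iff: "f \<in> Ftau_set \<Longrightarrow> x \<in> {0..1} \<Longrightarrow> y \<in> {0..1} \<Longrightarrow> f x \<le> f y \<longleftrightarrow> x \<le> y"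
  using strict_mono_on_less_eq Ftau_setD(4) by blast

lemma Ftau_image_atLeastAtMost:
  assumes "f \<in> Ftau_set" "0 \<le> p" "q \<le> 1"
  shows "f ` {p..q} \<subseteq> {f p..f q}"
proof
  fix y assume "y \<in> f ` {p..q}"
  then obtain x where x: "x \<in> {p..q}" "y = f x" by blast
  then show "y \<in> {f p..f q}" using Ftau_le_iff[OF assms(1), of p x] Ftau_le_iff[OF assms(1), of x q] assms by auto
qed

lemma Ftau_mem_open01:
  assumes "f \<in> Ftau_set" "0 < x" "x < 1"
  shows "0 < f x" "f x < 1"
  using Ftau_less_iff[OF assms(1), of 0 x] Ftau_less_iff[OF assms(1), of x 1] Ftau_endpoints[OF assms(1)] assms(2,3)
  by auto

lemma breakpoint_set_comp:
  assumes B: "breakpoint_set f B" and g: "g \<in> Ftau_set" and C: "breakpoint_set g C"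
  shows "breakpoint_set (f \<circ> g) (C \<union> ({0..1} \<inter> g -` B))" (is "breakpoint_set _ ?E")
  unfolding breakpoint_set_def
proof (intro conjI allI impI)
  have "finite (g -` B)" using Ftau_bij[OF g] breakpoint_setD(1)[OF B] by (simp add: bij_def finite_vimageI)
  then show "finite ?E" using breakpoint_setD(1)[OF C] by auto
  have "x \<in> Ztau" if "x \<in> {0..1}" "g x \<in> B" for x
    using that breakpoint_setD(2)[OF B] breakpoint_set_Ztau_iff[OF C Ftau_endpoints(1)[OF g]] by auto
  then show "?E \<subseteq> Ztau \<inter> {0..1}" using breakpoint_setD(2,3)[OF C] by auto
  show "0 \<in> ?E" "1 \<in> ?E" using breakpoint_setD(4,5)[OF C] by auto
  fix a b :: real assume ab: "0 \<le> a" "a < b" "b \<le> 1" "?E \<inter> {a<..<b} = {}"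
  have "tau_affine_on {a..b} g" using ab breakpoint_setD(6)[OF C, of a b] by auto
  moreover have "tau_affine_on {g a..g b} f"
  proof (rule breakpoint_setD(6)[OF B])
    show "0 \<le> g a" "g b \<le> 1" using Ftau_mem_01[OF g, of a] Ftau_mem_01[OF g, of b] ab by auto
    show "g a < g b" using Ftau_less_iff[OF g, of a b] ab by auto
    show "B \<inter> {g a<..<g b} = {}"
    proof (rule ccontr)
      assume "B \<inter> {g a<..<g b} \<noteq> {}"
      then obtain y where y: "y \<in> B" "g a < y" "y < g b" by auto
      have "continuous_on {a..b} g" using continuous_on_subset[OF Ftau_setD(3)[OF g]] ab by auto
      then obtain x where x: "x \<in> {a..b}" "g x = y" using IVT'[of g a y b] y ab by auto
      have "x \<noteq> a" "x \<noteq> b" using x(2) y(2,3) by auto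
      then have "x \<in> {a<..<b}" using x(1) by auto
      moreover have "x \<in> {0..1} \<inter> g -` B" using x(1) x(2) y(1) ab(1,3) by auto
      ultimately have "x \<in> ?E \<inter> {a<..<b}" by blast
      then show False using ab(4) by simp
    qed
  qed
  moreover have "g ` {a..b} \<subseteq> {g a..g b}" using Ftau_image_atLeastAtMost[OF g] ab by auto
  ultimately show "tau_affine_on {a..b} (f \<circ> g)" using tau_affine_on_comp by blast
qed

lemma Ftau_comp:
  assumes f: "f \<in> Ftau_set" and g: "g \<in> Ftau_set"
  shows "f \<circ> g \<in> Ftau_set"
proof -
  obtain B C where "breakpoint_set f B" "breakpoint_set g C" using Ftau_breakpoint_set f g by blast
  then have "breakpoint_set (f \<circ> g) (C \<union> ({0..1} \<inter> g -` B))" using breakpoint_set_comp g by blast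
  moreover have "supported_in {0..1} (f \<circ> g)" using Ftau_setD(1) f g supported_in_comp by blast
  moreover have "(f \<circ> g) 0 = 0" "(f \<circ> g) 1 = 1" using Ftau_endpoints[OF f] Ftau_endpoints[OF g] by simp_all
  ultimately show ?thesis using Ftau_setI by blast
qed

lemma breakpoint_set_inv:
  assumes f: "f \<in> Ftau_set" and C: "breakpoint_set f C"
  shows "breakpoint_set (finv f) (f ` C)"
  unfolding breakpoint_set_def
proof (intro conjI allI impI)
  have bij: "bij f" using Ftau_bij[OF f] .
  note h01 = Ftau_finv_mem_01[OF f]
  show "finite (f ` C)" using breakpoint_setD(1)[OF C] by simp
  have "f x \<in> Ztau" if "x \<in> C" for x
  proof -
    have "x \<in> {0..1}" "x \<in> Ztau" using that breakpoint_setD(2,3)[OF C] by auto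
    then show ?thesis using breakpoint_set_Ztau_iff[OF C Ftau_endpoints(1)[OF f]] by blast
  qed
  then show "f ` C \<subseteq> Ztau \<inter> {0..1}" using breakpoint_setD(3)[OF C] Ftau_mem_01[OF f] by auto
  show "0 \<in> f ` C" "1 \<in> f ` C" using breakpoint_setD(4,5)[OF C] Ftau_endpoints[OF f] by (metis imageI)+
  fix a b :: real assume ab: "0 \<le> a" "a < b" "b \<le> 1" "f ` C \<inter> {a<..<b} = {}"
  have ab01: "a \<in> {0..1}" "b \<in> {0..1}" using ab(1-3) by auto
  have "tau_affine_on {finv f a..finv f b} f"
  proof (rule breakpoint_setD(6)[OF C])
    show "0 \<le> finv f a" "finv f b \<le> 1" using h01 ab01 by auto
    show "finv f a < finv f b"
      using Ftau_less_iff[OF f h01[OF ab01(1)] h01[OF ab01(2)]] ab(2) bij by simp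
    show "C \<inter> {finv f a<..<finv f b} = {}"
    proof (rule ccontr)
      assume "C \<inter> {finv f a<..<finv f b} \<noteq> {}"
      then obtain y where y: "y \<in> C" "finv f a < y" "y < finv f b" by auto
      have "y \<in> {0..1}" using y(1) breakpoint_setD(3)[OF C] by auto
      then have "a < f y" "f y < b"
        using Ftau_less_iff[OF f h01[OF ab01(1)]] Ftau_less_iff[OF f _ h01[OF ab01(2)]] y(2,3) bij by simp_all
      then have "f y \<in> f ` C \<inter> {a<..<b}" using y(1) by simp
      then show False using ab(4) by simp
    qed
  qed
  moreover have "finv f y \<in> {finv f a..finv f b} \<and> f (finv f y) = y" if "y \<in> {a..b}" for y
  proof -
    have y01: "y \<in> {0..1}" using that ab(1,3) by auto
    show ?thesis
      using Ftau_le_iff[OF f h01[OF ab01(1)] h01[OF y01]] Ftau_le_iff[OF f h01[OF y01] h01[OF ab01(2)]]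
        that bij by simp
  qed
  ultimately show "tau_affine_on {a..b} (finv f)" by (rule tau_affine_on_inverse)
qed

lemma Ftau_inv:
  assumes f: "f \<in> Ftau_set"
  shows "finv f \<in> Ftau_set"
proof -
  obtain C where "breakpoint_set f C" using Ftau_breakpoint_set f by blast
  then have "breakpoint_set (finv f) (f ` C)" using breakpoint_set_inv f by blast
  moreover have "supported_in {0..1} (finv f)"
    using supported_in_inv Ftau_setD(1) Ftau_bij f bij_is_inj by blast
  moreover have "finv f 0 = 0" "finv f 1 = 1"
    using Ftau_endpoints[OF f] Ftau_bij[OF f] by (metis bij_finv_apply(2))+
  ultimately show ?thesis using Ftau_setI by blast
qed

lemma Ftau_id: "id \<in> Ftau_set"
proof (rule Ftau_setI[where B = "{0, 1}"])
  show "breakpoint_set id {0, 1}"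
    unfolding breakpoint_set_def tau_affine_on_def by (auto intro!: exI[of _ 0])
qed (simp_all add: supported_in_id)

lemma carrier_Ftau [simp]: "carrier Ftau = Ftau_set"
  and mult_Ftau [simp]: "x \<otimes>\<^bsub>Ftau\<^esub> y = x \<circ> y"
  and one_Ftau [simp]: "\<one>\<^bsub>Ftau\<^esub> = id"
  by (simp_all add: Ftau_def)

lemma group_Ftau: "group Ftau"
proof (rule groupI)
  fix x assume "x \<in> carrier Ftau"
  then show "\<exists>y\<in>carrier Ftau. y \<otimes>\<^bsub>Ftau\<^esub> x = \<one>\<^bsub>Ftau\<^esub>"
    using Ftau_inv Ftau_bij by (auto intro!: bexI[of _ "finv x"] simp: fun_eq_iff)
qed (simp_all add: Ftau_comp Ftau_id o_assoc)

lemma inv_Ftau: "f \<in> Ftau_set \<Longrightarrow> inv\<^bsub>Ftau\<^esub> f = finv f"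
  using group.inv_equality[OF group_Ftau, of "finv f" f] Ftau_inv Ftau_bij by (simp add: fun_eq_iff)

lemma funpow_int_in_Ftau: "f \<in> Ftau_set \<Longrightarrow> funpow_int f k \<in> Ftau_set"
  using funpow_int_hom[where P = "\<lambda>g _. g \<in> Ftau_set" and f = f and k = 0 and j = k]
  by (simp add: Ftau_id Ftau_comp Ftau_inv)

section \<open>Germs at the endpoints\<close>

definition germ_at_0 :: "(real \<Rightarrow> real) \<Rightarrow> int \<Rightarrow> bool" where
  "germ_at_0 f k \<longleftrightarrow> (\<exists>d>0. \<forall>x\<in>{0..d}. f x = tau powi k * x)"

definition germ_at_1 :: "(real \<Rightarrow> real) \<Rightarrow> int \<Rightarrow> bool" where
  "germ_at_1 f k \<longleftrightarrow> (\<exists>d>0. \<forall>x\<in>{1-d..1}. f x = 1 - tau powi k * (1 - x))"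

lemma germ_at_0_id: "germ_at_0 id 0"
  unfolding germ_at_0_def by (auto intro: exI[of _ 1])

lemma germ_at_1_id: "germ_at_1 id 0"
  unfolding germ_at_1_def by (auto intro: exI[of _ 1])

lemma germ_at_0_comp:
  assumes "germ_at_0 f k" "germ_at_0 g j"
  shows "germ_at_0 (f \<circ> g) (k + j)"
proof -
  obtain d1 where d1: "d1 > 0" "\<forall>x\<in>{0..d1}. f x = tau powi k * x" using assms(1) unfolding germ_at_0_def by auto
  obtain d2 where d2: "d2 > 0" "\<forall>x\<in>{0..d2}. g x = tau powi j * x" using assms(2) unfolding germ_at_0_def by auto
  define d where "d = min d2 (d1 * tau powi (- j))"
  have "\<forall>x\<in>{0..d}. (f \<circ> g) x = tau powi (k + j) * x"
  proof
    fix x assume x: "x \<in> {0..d}"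
    then have gx: "g x = tau powi j * x" using d2 unfolding d_def by auto
    have "tau powi j * x \<le> tau powi j * (d1 * tau powi (- j))"
      using x tau_powi_pos[of j] unfolding d_def by (intro mult_left_mono) auto
    also have "\<dots> = d1" by (simp add: power_int_minus)
    finally have "g x \<in> {0..d1}" using gx x tau_powi_pos[of j] by auto
    then show "(f \<circ> g) x = tau powi (k + j) * x" using d1 gx by (simp add: power_int_add)
  qed
  moreover have "d > 0" unfolding d_def using d1 d2 tau_powi_pos by simp
  ultimately show ?thesis unfolding germ_at_0_def by blast
qed

lemma germ_at_1_comp:
  assumes "germ_at_1 f k" "germ_at_1 g j"
  shows "germ_at_1 (f \<circ> g) (k + j)"
proof -
  obtain d1 where d1: "d1 > 0" "\<forall>x\<in>{1-d1..1}. f x = 1 - tau powi k * (1 - x)" using assms(1) unfolding germ_at_1_def by auto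
  obtain d2 where d2: "d2 > 0" "\<forall>x\<in>{1-d2..1}. g x = 1 - tau powi j * (1 - x)" using assms(2) unfolding germ_at_1_def by auto
  define d where "d = min d2 (d1 * tau powi (- j))"
  have "\<forall>x\<in>{1-d..1}. (f \<circ> g) x = 1 - tau powi (k + j) * (1 - x)"
  proof
    fix x assume x: "x \<in> {1-d..1}"
    then have gx: "g x = 1 - tau powi j * (1 - x)" using d2 unfolding d_def by auto
    have "tau powi j * (1 - x) \<le> tau powi j * (d1 * tau powi (- j))"
      using x tau_powi_pos[of j] unfolding d_def by (intro mult_left_mono) auto
    also have "\<dots> = d1" by (simp add: power_int_minus)
    finally have "g x \<in> {1-d1..1}" using gx x tau_powi_pos[of j] by auto
    then show "(f \<circ> g) x = 1 - tau powi (k + j) * (1 - x)" using d1 gx by (simp add: power_int_add)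
  qed
  moreover have "d > 0" unfolding d_def using d1 d2 tau_powi_pos by simp
  ultimately show ?thesis unfolding germ_at_1_def by blast
qed

lemma germ_at_0_inv:
  assumes "inj f" "germ_at_0 f k"
  shows "germ_at_0 (finv f) (- k)"
proof -
  obtain d1 where d1: "d1 > 0" "\<forall>x\<in>{0..d1}. f x = tau powi k * x" using assms(2) unfolding germ_at_0_def by auto
  define d where "d = tau powi k * d1"
  have "\<forall>y\<in>{0..d}. finv f y = tau powi (- k) * y"
  proof
    fix y assume y: "y \<in> {0..d}"
    define x where "x = tau powi (- k) * y"
    have "x \<le> tau powi (- k) * d" unfolding x_def using y tau_powi_pos[of "- k"] by (intro mult_left_mono) auto
    also have "\<dots> = d1" unfolding d_def by (simp add: power_int_minus)
    finally have "x \<in> {0..d1}" using y tau_powi_pos[of "- k"] unfolding x_def by auto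
    then have "f x = y" using d1 unfolding x_def by (simp add: power_int_minus)
    then show "finv f y = tau powi (- k) * y" using inv_f_f[OF assms(1)] unfolding x_def by metis
  qed
  moreover have "d > 0" unfolding d_def using d1 tau_powi_pos by simp
  ultimately show ?thesis unfolding germ_at_0_def by blast
qed

lemma germ_at_1_inv:
  assumes "inj f" "germ_at_1 f k"
  shows "germ_at_1 (finv f) (- k)"
proof -
  obtain d1 where d1: "d1 > 0" "\<forall>x\<in>{1-d1..1}. f x = 1 - tau powi k * (1 - x)" using assms(2) unfolding germ_at_1_def by auto
  define d where "d = tau powi k * d1"
  have "\<forall>y\<in>{1-d..1}. finv f y = 1 - tau powi (- k) * (1 - y)"
  proof
    fix y assume y: "y \<in> {1-d..1}"
    define x where "x = 1 - tau powi (- k) * (1 - y)"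
    have "tau powi (- k) * (1 - y) \<le> tau powi (- k) * d" using y tau_powi_pos[of "- k"] by (intro mult_left_mono) auto
    also have "\<dots> = d1" unfolding d_def by (simp add: power_int_minus)
    finally have "x \<in> {1-d1..1}" using y tau_powi_pos[of "- k"] unfolding x_def by auto
    then have "f x = 1 - tau powi k * (tau powi (- k) * (1 - y))" using d1 unfolding x_def by simp
    also have "\<dots> = y" using tau_powi_pos[of k] by (simp add: power_int_minus field_simps)
    finally have "f x = y" .
    then show "finv f y = 1 - tau powi (- k) * (1 - y)" using inv_f_f[OF assms(1)] unfolding x_def by metis
  qed
  moreover have "d > 0" unfolding d_def using d1 tau_powi_pos by simp
  ultimately show ?thesis unfolding germ_at_1_def by blast
qed

lemma germ_at_0_funpow_int: "inj f \<Longrightarrow> germ_at_0 f k \<Longrightarrow> germ_at_0 (funpow_int f j) (j * k)"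
  by (rule funpow_int_hom[where P = germ_at_0]) (simp_all add: germ_at_0_id germ_at_0_comp germ_at_0_inv)

lemma germ_at_1_funpow_int: "inj f \<Longrightarrow> germ_at_1 f k \<Longrightarrow> germ_at_1 (funpow_int f j) (j * k)"
  by (rule funpow_int_hom[where P = germ_at_1]) (simp_all add: germ_at_1_id germ_at_1_comp germ_at_1_inv)

lemma germ_at_0_if_supported_in:
  assumes "supported_in S f" "S \<subseteq> {a..}" "0 < a"
  shows "germ_at_0 f 0"
  unfolding germ_at_0_def
proof (intro exI[of _ "a / 2"] conjI ballI)
  fix x assume "x \<in> {0..a / 2}"
  then have "x \<notin> S" using assms(2,3) by auto
  then show "f x = tau powi 0 * x" using supported_inD[OF assms(1)] by simp
qed (use assms(3) in simp)

lemma germ_at_1_if_supported_in: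
  assumes "supported_in S f" "S \<subseteq> {..b}" "b < 1"
  shows "germ_at_1 f 0"
  unfolding germ_at_1_def
proof (intro exI[of _ "(1 - b) / 2"] conjI ballI)
  fix x assume "x \<in> {1 - (1 - b) / 2..1}"
  then have "b < x" using assms(3) by (auto simp: field_simps)
  then have "x \<notin> S" using assms(2) by auto
  then show "f x = 1 - tau powi 0 * (1 - x)" using supported_inD[OF assms(1)] by simp
qed (use assms(3) in simp)

lemma Ftau_germ_at_0:
  assumes f: "f \<in> Ftau_set"
  shows "\<exists>k. germ_at_0 f k"
proof -
  obtain B where B: "breakpoint_set f B" using Ftau_breakpoint_set[OF f] by blast
  obtain a b where ab: "a \<in> B" "b \<in> B" "a \<le> 0" "0 < b" "B \<inter> {a<..<b} = {}"
    using breakpoint_set_gap_right[OF B, of 0] by auto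
  have "a = 0" "b \<le> 1" using ab breakpoint_setD(3)[OF B] by force+
  then obtain k c where kc: "\<forall>x\<in>{0..b}. f x = tau powi k * x + c"
    using breakpoint_setD(6)[OF B, of 0 b] ab unfolding tau_affine_on_def by auto
  have "c = 0" using kc[rule_format, of 0] Ftau_endpoints(1)[OF f] ab(4) by simp
  then show ?thesis unfolding germ_at_0_def using kc ab(4) by auto
qed

lemma Ftau_germ_at_1:
  assumes f: "f \<in> Ftau_set"
  shows "\<exists>k. germ_at_1 f k"
proof -
  obtain B where B: "breakpoint_set f B" using Ftau_breakpoint_set[OF f] by blast
  obtain a b where ab: "a \<in> B" "b \<in> B" "a < 1" "1 \<le> b" "B \<inter> {a<..<b} = {}"
    using breakpoint_set_gap_left[OF B, of 1] by auto
  have "b = 1" "0 \<le> a" using ab breakpoint_setD(3)[OF B] by force+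
  then obtain k c where kc: "\<forall>x\<in>{a..1}. f x = tau powi k * x + c"
    using breakpoint_setD(6)[OF B, of a 1] ab unfolding tau_affine_on_def by auto
  have "c = 1 - tau powi k" using kc[rule_format, of 1] Ftau_endpoints(2)[OF f] ab(3) by simp
  then have "\<forall>x\<in>{1 - (1 - a)..1}. f x = 1 - tau powi k * (1 - x)" using kc by (simp add: algebra_simps)
  then show ?thesis unfolding germ_at_1_def using ab(3) by (intro exI[of _ k] exI[of _ "1 - a"]) auto
qed

lemma Ftau_compact_support_if_germs_trivial:
  assumes f: "f \<in> Ftau_set" and "germ_at_0 f 0" "germ_at_1 f 0"
  shows "\<exists>p q. 0 < p \<and> p \<le> q \<and> q < 1 \<and> supported_in {p..q} f"
proof -
  obtain d1 where d1: "d1 > 0" "\<forall>x\<in>{0..d1}. f x = x" using assms(2) unfolding germ_at_0_def by auto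
  obtain d2 where d2: "d2 > 0" "\<forall>x\<in>{1-d2..1}. f x = x" using assms(3) unfolding germ_at_1_def by auto
  define p where "p = min d1 (1/2)"
  define q where "q = max (1 - d2) (1/2)"
  have "f x = x" if "x \<notin> {p..q}" for x
  proof (cases "x \<in> {0..1}")
    case True
    then have "x \<in> {0..d1} \<or> x \<in> {1-d2..1}" using that unfolding p_def q_def by auto
    then show ?thesis using d1 d2 by blast
  qed (use supported_inD[OF Ftau_setD(1)[OF f]] in simp)
  then have "supported_in {p..q} f" unfolding supported_in_def by blast
  moreover have "0 < p" "p \<le> q" "q < 1" using d1 d2 unfolding p_def q_def by auto
  ultimately show ?thesis by blast
qed

section \<open>Bumps\<close>

(* The analogue on [a, b] of the generator x_0 of Thompson's group F: slope tau up to the breakpoint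
   a + tau (b - a), then slope 1 + tau = 1 / tau. *)
definition bump :: "real \<Rightarrow> real \<Rightarrow> real \<Rightarrow> real" where
  "bump a b x = (if x < a \<or> b < x then x
     else if x \<le> a + tau * (b - a) then a + tau * (x - a) else b - (1 + tau) * (b - x))"

lemma bump_break_between:
  assumes "a < b"
  shows "a < a + tau * (b - a)" "a + tau * (b - a) < b"
proof -
  show "a < a + tau * (b - a)" using assms tau_pos by simp
  have "tau * (b - a) < 1 * (b - a)" using assms tau_less_1 by (intro mult_strict_right_mono) auto
  then show "a + tau * (b - a) < b" by simp
qed

lemma bump_outside:
  assumes "a < b" "x \<le> a \<or> b \<le> x"
  shows "bump a b x = x"
  using assms bump_break_between[OF assms(1)] unfolding bump_def by auto

lemma bump_first_piece:
  assumes "a < b" "a \<le> x" "x \<le> a + tau * (b - a)"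
  shows "bump a b x = a + tau * (x - a)"
  using assms bump_break_between[OF assms(1)] unfolding bump_def by auto

lemma bump_second_piece:
  assumes "a < b" "a + tau * (b - a) \<le> x" "x \<le> b"
  shows "bump a b x = b - (1 + tau) * (b - x)"
proof (cases "x = a + tau * (b - a)")
  case True
  have "bump a b x = a + tau * (x - a)"
    using bump_first_piece[OF assms(1)] bump_break_between[OF assms(1)] True by simp
  also have "\<dots> = b - (1 + tau) * (b - x)"
    unfolding True using tau_squared by (simp add: algebra_simps)
  finally show ?thesis .
next
  case False
  then show ?thesis using assms bump_break_between[OF assms(1)] unfolding bump_def by auto
qed

lemma supported_in_bump: "a < b \<Longrightarrow> supported_in {a<..<b} (bump a b)"
  unfolding supported_in_def using bump_outside by force

lemma bump_less:
  assumes "a < x" "x < b"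
  shows "bump a b x < x"
proof (cases "x \<le> a + tau * (b - a)")
  case True
  have "tau * (x - a) < x - a" using mult_strict_right_mono[OF tau_less_1, of "x - a"] assms by simp
  moreover have "bump a b x = a + tau * (x - a)" using bump_first_piece[of a b x] assms True by simp
  ultimately show ?thesis by linarith
next
  case False
  have "0 < tau * (b - x)" using tau_pos assms by simp
  moreover have "bump a b x = x - tau * (b - x)"
    using bump_second_piece[of a b x] assms False by (simp add: algebra_simps)
  ultimately show ?thesis by linarith
qed

lemma bump_in_Ftau:
  assumes Z: "a \<in> Ztau" "b \<in> Ztau" and ab: "0 \<le> a" "a < b" "b \<le> 1"
  shows "bump a b \<in> Ftau_set"
proof (rule Ftau_setI)
  define m where "m = a + tau * (b - a)"
  have m: "a < m" "m < b" using bump_break_between[OF ab(2)] unfolding m_def by auto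
  have "m \<in> Ztau" unfolding m_def using Z by (intro Ztau_add Ztau_mult Ztau_diff) simp_all
  then have sub: "{0, a, m, b, 1} \<subseteq> Ztau \<inter> {0..1}" using Z ab m by auto
  have gaps: "tau_affine_on {c..d} (bump a b)"
    if cd: "c < d" "{0, a, m, b, 1} \<inter> {c<..<d} = {}" for c d
  proof -
    have "\<not> (c < a \<and> a < d)" "\<not> (c < m \<and> m < d)" "\<not> (c < b \<and> b < d)" using cd(2) by auto
    then consider "d \<le> a" | "a \<le> c" "d \<le> m" | "m \<le> c" "d \<le> b" | "b \<le> c"
      using cd(1) m by linarith
    then show ?thesis
    proof cases
      case 1
      then show ?thesis unfolding tau_affine_on_def using bump_outside[OF ab(2)] by (intro exI[of _ 0] exI[of _ 0]) auto
    next
      case 2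
      then show ?thesis unfolding tau_affine_on_def using bump_first_piece[OF ab(2)] unfolding m_def
        by (intro exI[of _ 1] exI[of _ "a - tau * a"]) (auto simp: algebra_simps)
    next
      case 3
      then show ?thesis unfolding tau_affine_on_def using bump_second_piece[OF ab(2)] tau_powi_minus_1
        unfolding m_def
        by (intro exI[of _ "- 1"] exI[of _ "b - (1 + tau) * b"]) (auto simp: algebra_simps)
    next
      case 4
      then show ?thesis unfolding tau_affine_on_def using bump_outside[OF ab(2)] by (intro exI[of _ 0] exI[of _ 0]) auto
    qed
  qed
  show "breakpoint_set (bump a b) {0, a, m, b, 1}"
    unfolding breakpoint_set_def
  proof (intro conjI allI impI)
    fix c d :: real assume "0 \<le> c" "c < d" "d \<le> 1" "{0, a, m, b, 1} \<inter> {c<..<d} = {}"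
    then show "tau_affine_on {c..d} (bump a b)" using gaps by blast
  qed (use sub in simp_all)
  have "{a<..<b} \<subseteq> {0..1}" using ab by auto
  then show "supported_in {0..1} (bump a b)" using supported_in_mono[OF supported_in_bump[OF ab(2)]] by blast
  show "bump a b 0 = 0" "bump a b 1 = 1" using bump_outside[OF ab(2)] ab by auto
qed

lemma germ_at_0_bump:
  assumes "0 < b"
  shows "germ_at_0 (bump 0 b) 1"
  unfolding germ_at_0_def
proof (intro exI[of _ "tau * b"] conjI ballI)
  show "0 < tau * b" using assms tau_pos by simp
  fix x assume "x \<in> {0..tau * b}"
  then show "bump 0 b x = tau powi 1 * x" using bump_first_piece[OF assms] by simp
qed

lemma germ_at_1_bump:
  assumes "a < 1"
  shows "germ_at_1 (bump a 1) (- 1)"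
  unfolding germ_at_1_def
proof (intro exI[of _ "1 - (a + tau * (1 - a))"] conjI ballI)
  show "0 < 1 - (a + tau * (1 - a))" using bump_break_between[OF assms] by simp
  fix x assume "x \<in> {1 - (1 - (a + tau * (1 - a)))..1}"
  then show "bump a 1 x = 1 - tau powi (- 1) * (1 - x)"
    using bump_second_piece[OF assms] tau_powi_minus_1 by simp
qed

lemma funpow_tendsto_left_endpoint:
  fixes f :: "real \<Rightarrow> real"
  assumes cont: "continuous_on {a<..<b} f" and maps: "\<And>x. x \<in> {a<..<b} \<Longrightarrow> f x \<in> {a<..<b}"
    and below: "\<And>x. x \<in> {a<..<b} \<Longrightarrow> f x < x" and w: "w \<in> {a<..<b}"
  shows "(\<lambda>n. (f ^^ n) w) \<longlonglongrightarrow> a"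
proof -
  define s where "s n = (f ^^ n) w" for n
  have s_in: "s n \<in> {a<..<b}" for n
  proof (induction n)
    case 0
    show ?case using w by (simp add: s_def)
  next
    case (Suc n)
    then show ?case using maps by (simp add: s_def)
  qed
  have s_Suc: "s (Suc n) = f (s n)" for n unfolding s_def by simp
  have "decseq s" unfolding decseq_Suc_iff using s_Suc below s_in less_imp_le by metis
  then obtain L where L: "s \<longlonglongrightarrow> L" "\<And>n. L \<le> s n"
    using decseq_convergent[of s a] s_in by (metis greaterThanLessThan_iff less_imp_le)
  have "a \<le> L" using L(1) s_in by (intro LIMSEQ_le_const) (auto intro: less_imp_le)
  moreover have "L < b" using L(2)[of 0] s_in[of 0] by simp
  moreover have False if L_in: "L \<in> {a<..<b}"
  proof -
    have "(\<lambda>n. f (s n)) \<longlonglongrightarrow> f L"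
      using continuous_on_tendsto_compose[OF cont L(1) L_in] s_in by simp
    moreover have "(\<lambda>n. f (s n)) \<longlonglongrightarrow> L" using LIMSEQ_Suc[OF L(1)] unfolding s_Suc .
    ultimately have "f L = L" using LIMSEQ_unique by blast
    then show False using below[OF L_in] by simp
  qed
  ultimately have "L = a" by fastforce
  then show ?thesis using L(1) unfolding s_def by simp
qed

lemma bump_funpow_less:
  assumes Z: "a \<in> Ztau" "b \<in> Ztau" and ab: "0 \<le> a" "a < w" "w < b" "b \<le> 1" and "a < c"
  shows "\<exists>n. (bump a b ^^ n) w < c"
proof -
  have ab': "a < b" using ab by simp
  have f: "bump a b \<in> Ftau_set" using bump_in_Ftau Z ab by simp
  have "(\<lambda>n. (bump a b ^^ n) w) \<longlonglongrightarrow> a"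
  proof (rule funpow_tendsto_left_endpoint)
    have "{a<..<b} \<subseteq> {0..1}" using ab by auto
    then show "continuous_on {a<..<b} (bump a b)" by (rule continuous_on_subset[OF Ftau_setD(3)[OF f]])
    show "bump a b x \<in> {a<..<b}" if "x \<in> {a<..<b}" for x
      using supported_in_mem[OF bij_is_inj[OF Ftau_bij[OF f]] supported_in_bump[OF ab'] that] .
  qed (use ab bump_less in auto)
  then show ?thesis using assms(7) by (metis eventually_sequentially order_refl order_tendstoD(2))
qed

section \<open>Compactly supported elements\<close>

definition end_bumps :: "real \<Rightarrow> real \<Rightarrow> int \<Rightarrow> int \<Rightarrow> real \<Rightarrow> real" where
  "end_bumps p q i j = funpow_int (bump 0 p) i \<circ> funpow_int (bump q 1) j"

context
  fixes p q :: real
  assumes Z: "p \<in> Ztau" "q \<in> Ztau" and pq: "0 < p" "p \<le> q" "q < 1"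
begin

private lemma bumps_in_Ftau: "bump 0 p \<in> Ftau_set" "bump q 1 \<in> Ftau_set"
  using bump_in_Ftau Z pq by auto

private lemma bumps_inj: "inj (bump 0 p)" "inj (bump q 1)"
  using Ftau_bij[OF bumps_in_Ftau(1)] Ftau_bij[OF bumps_in_Ftau(2)] bij_is_inj by auto

private lemma supported_in_funpow_int_bumps:
  "supported_in {0<..<p} (funpow_int (bump 0 p) i)" "supported_in {q<..<1} (funpow_int (bump q 1) j)"
  using supported_in_funpow_int[OF bumps_inj(1) supported_in_bump] supported_in_funpow_int[OF bumps_inj(2) supported_in_bump] pq
  by auto

lemma end_bumps_in_Ftau: "end_bumps p q i j \<in> Ftau_set"
  unfolding end_bumps_def using funpow_int_in_Ftau bumps_in_Ftau Ftau_comp by blast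

lemma germ_at_0_end_bumps: "germ_at_0 (end_bumps p q i j) i"
proof -
  have "germ_at_0 (funpow_int (bump 0 p) i) (i * 1)"
    using germ_at_0_funpow_int[OF bumps_inj(1) germ_at_0_bump] pq by simp
  moreover have "germ_at_0 (bump q 1) 0"
    using germ_at_0_if_supported_in[where a = q, OF supported_in_bump[of q 1]] pq by force
  then have "germ_at_0 (funpow_int (bump q 1) j) (j * 0)" by (rule germ_at_0_funpow_int[OF bumps_inj(2)])
  ultimately show ?thesis unfolding end_bumps_def using germ_at_0_comp by fastforce
qed

lemma germ_at_1_end_bumps: "germ_at_1 (end_bumps p q i j) (- j)"
proof -
  have "germ_at_1 (bump 0 p) 0"
    using germ_at_1_if_supported_in[where b = p, OF supported_in_bump[of 0 p]] pq by force
  then have "germ_at_1 (funpow_int (bump 0 p) i) (i * 0)" by (rule germ_at_1_funpow_int[OF bumps_inj(1)])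
  moreover have "germ_at_1 (funpow_int (bump q 1) j) (j * - 1)"
    using germ_at_1_funpow_int[OF bumps_inj(2) germ_at_1_bump] pq by simp
  ultimately show ?thesis unfolding end_bumps_def using germ_at_1_comp by fastforce
qed

lemma end_bumps_fixes:
  assumes "t \<in> {p..q}"
  shows "end_bumps p q i j t = t"
proof -
  have "t \<notin> {q<..<1}" "t \<notin> {0<..<p}" using assms by auto
  then show ?thesis unfolding end_bumps_def
    using supported_inD[OF supported_in_funpow_int_bumps(1)] supported_inD[OF supported_in_funpow_int_bumps(2)]
    by simp
qed

lemma end_bumps_commute: "end_bumps p q i j \<circ> end_bumps p q i' j' = end_bumps p q i' j' \<circ> end_bumps p q i j"
proof -
  have "funpow_int (bump 0 p) k \<circ> funpow_int (bump q 1) l = funpow_int (bump q 1) l \<circ> funpow_int (bump 0 p) k" for k l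
    using supported_in_disjoint_commute[OF _ _ supported_in_funpow_int_bumps] pq
      bij_is_inj[OF bij_funpow_int[OF Ftau_bij[OF bumps_in_Ftau(1)]]]
      bij_is_inj[OF bij_funpow_int[OF Ftau_bij[OF bumps_in_Ftau(2)]]] by auto
  moreover have "funpow_int f k \<circ> funpow_int f l = funpow_int f l \<circ> funpow_int f k" if "f \<in> {bump 0 p, bump q 1}" for f k l
    using funpow_int_commute Ftau_bij bumps_in_Ftau that by blast
  ultimately show ?thesis unfolding end_bumps_def by (metis (no_types, lifting) comp_assoc insertCI)
qed

end

definition compactly_supported :: "(real \<Rightarrow> real) \<Rightarrow> bool" where
  "compactly_supported f \<longleftrightarrow> f \<in> Ftau_set \<and> (\<exists>p q. 0 < p \<and> p \<le> q \<and> q < 1 \<and> supported_in {p..q} f)"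

lemma compactly_supportedI:
  "f \<in> Ftau_set \<Longrightarrow> 0 < p \<Longrightarrow> p \<le> q \<Longrightarrow> q < 1 \<Longrightarrow> supported_in {p..q} f \<Longrightarrow> compactly_supported f"
  unfolding compactly_supported_def by blast

lemma supported_in_conj_Ftau:
  assumes "c \<in> Ftau_set" "supported_in {p..q} f" "0 \<le> p" "q \<le> 1"
  shows "supported_in {c p..c q} (c \<circ> f \<circ> finv c)"
  using supported_in_mono[OF supported_in_conj[OF bij_is_surj[OF Ftau_bij[OF assms(1)]] assms(2)]]
    Ftau_image_atLeastAtMost[OF assms(1,3,4)] by blast

lemma compactly_supported_conj:
  assumes c: "c \<in> Ftau_set" and f: "compactly_supported f"
  shows "compactly_supported (c \<circ> f \<circ> finv c)"
proof -
  obtain p q where pq: "0 < p" "p \<le> q" "q < 1" "supported_in {p..q} f" and "f \<in> Ftau_set"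
    using f unfolding compactly_supported_def by blast
  then have "c \<circ> f \<circ> finv c \<in> Ftau_set" using c Ftau_comp Ftau_inv by blast
  moreover have "0 < c p" "c p \<le> c q" "c q < 1"
    using Ftau_mem_open01[OF c, of p] Ftau_mem_open01[OF c, of q] Ftau_le_iff[OF c, of p q] pq by auto
  moreover have "supported_in {c p..c q} (c \<circ> f \<circ> finv c)" using supported_in_conj_Ftau c pq by simp
  ultimately show ?thesis by (rule compactly_supportedI)
qed

lemma compactly_supported_comp_end_bumps:
  assumes b: "\<beta> \<in> Ftau_set" and Z: "p \<in> Ztau" "q \<in> Ztau" and pq: "0 < p" "p \<le> q" "q < 1"
  shows "\<exists>i j. compactly_supported (\<beta> \<circ> end_bumps p q i j)"
proof -
  obtain k0 k1 where k: "germ_at_0 \<beta> k0" "germ_at_1 \<beta> k1" using Ftau_germ_at_0 Ftau_germ_at_1 b by blast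
  define s where "s = \<beta> \<circ> end_bumps p q (- k0) k1"
  have s: "s \<in> Ftau_set" unfolding s_def using Ftau_comp b end_bumps_in_Ftau Z pq by blast
  have "germ_at_0 s (k0 + - k0)" unfolding s_def by (rule germ_at_0_comp[OF k(1) germ_at_0_end_bumps[OF Z pq]])
  moreover have "germ_at_1 s (k1 + - k1)" unfolding s_def by (rule germ_at_1_comp[OF k(2) germ_at_1_end_bumps[OF Z pq]])
  ultimately have "germ_at_0 s 0" "germ_at_1 s 0" by simp_all
  then have "compactly_supported s"
    using Ftau_compact_support_if_germs_trivial[OF s] s unfolding compactly_supported_def by blast
  then show ?thesis unfolding s_def by blast
qed

lemma compactly_supported_agreeing:
  assumes b: "\<beta> \<in> Ftau_set" and pq: "0 < p" "p \<le> q" "q < 1"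
  shows "\<exists>s. compactly_supported s \<and> (\<forall>t\<in>{p..q}. s t = \<beta> t)"
proof -
  obtain p' where p': "p' \<in> Ztau" "0 < p'" "p' < p" using Ztau_dense[of 0 p] pq by auto
  obtain q' where q': "q' \<in> Ztau" "q < q'" "q' < 1" using Ztau_dense[of q 1] pq by auto
  obtain i j where "compactly_supported (\<beta> \<circ> end_bumps p' q' i j)"
    using compactly_supported_comp_end_bumps[OF b p'(1) q'(1)] p' q' pq by fastforce
  moreover have "\<forall>t\<in>{p..q}. (\<beta> \<circ> end_bumps p' q' i j) t = \<beta> t"
    using end_bumps_fixes[OF p'(1) q'(1)] p' q' pq by auto
  ultimately show ?thesis by blast
qed

lemma Ftau_decompose:
  assumes a: "a \<in> Ftau_set"
  shows "\<exists>i j c. compactly_supported c \<and> a = finv (end_bumps tau tau i j) \<circ> c"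
proof -
  have Z: "tau \<in> Ztau" "0 < tau" "tau \<le> tau" "tau < 1" using tau_pos tau_less_1 by simp_all
  obtain i j where c: "compactly_supported (a \<circ> end_bumps tau tau i j)"
    using compactly_supported_comp_end_bumps[OF a Z(1) Z(1) Z(2-4)] by blast
  define e where "e = end_bumps tau tau i j"
  have e: "e \<in> Ftau_set" unfolding e_def using end_bumps_in_Ftau Z by blast
  have "compactly_supported (e \<circ> (a \<circ> e) \<circ> finv e)"
    using compactly_supported_conj[OF e] c unfolding e_def by blast
  moreover have "a = finv e \<circ> (e \<circ> (a \<circ> e) \<circ> finv e)" using Ftau_bij[OF e] by (simp add: fun_eq_iff)
  ultimately show ?thesis unfolding e_def by blast
qed

section \<open>The commutator subgroup\<close>

abbreviation Ftau' :: "(real \<Rightarrow> real) set" where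
  "Ftau' \<equiv> derived Ftau Ftau_set"

lemma subgroup_Ftau': "subgroup Ftau' Ftau"
  using group.derived_is_subgroup[OF group_Ftau, of Ftau_set] by simp

lemma Ftau'_subset: "Ftau' \<subseteq> Ftau_set"
  using subgroup.subset[OF subgroup_Ftau'] by simp

lemma Ftau'_comp: "x \<in> Ftau' \<Longrightarrow> y \<in> Ftau' \<Longrightarrow> x \<circ> y \<in> Ftau'"
  using subgroup.m_closed[OF subgroup_Ftau'] by simp

lemma Ftau'_inv: "x \<in> Ftau' \<Longrightarrow> finv x \<in> Ftau'"
  using subgroup.m_inv_closed[OF subgroup_Ftau'] inv_Ftau Ftau'_subset by fastforce

lemma commutator_in_Ftau':
  assumes "f \<in> Ftau_set" "g \<in> Ftau_set"
  shows "commutator f g \<in> Ftau'"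
proof -
  have "f \<otimes>\<^bsub>Ftau\<^esub> g \<otimes>\<^bsub>Ftau\<^esub> inv\<^bsub>Ftau\<^esub> f \<otimes>\<^bsub>Ftau\<^esub> inv\<^bsub>Ftau\<^esub> g \<in> Ftau'"
    unfolding derived_def using assms by (intro generate.incl) auto
  then show ?thesis using assms by (simp add: inv_Ftau commutator_def)
qed

lemma bump_power_pushing_left:
  assumes "a \<in> Ztau" "w \<in> Ztau" "0 \<le> a" "a < y" "y < w" "w \<le> 1" "a < c"
  shows "\<exists>d\<in>Ftau_set. supported_in {a<..<w} d \<and> d y < c"
proof -
  have aw: "a < w" using assms(4,5) by simp
  obtain n where "(bump a w ^^ n) y < c" using bump_funpow_less[OF assms] by blast
  moreover have "bump a w ^^ n \<in> Ftau_set"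
    using funpow_int_in_Ftau[OF bump_in_Ftau[OF assms(1-3) aw assms(6)], of "int n"] by (simp add: funpow_int_def)
  moreover have "supported_in {a<..<w} (bump a w ^^ n)"
    by (rule supported_in_funpow[OF supported_in_bump[OF aw]])
  ultimately show ?thesis by blast
qed

lemma Ftau_push_below:
  assumes "0 < w" "w < 1" "0 < p"
  shows "\<exists>k\<in>Ftau_set. k w < p"
proof -
  have "\<exists>k\<in>Ftau_set. supported_in {0<..<1} k \<and> k w < p"
    by (rule bump_power_pushing_left) (use assms in simp_all)
  then show ?thesis by blast
qed

lemma Ftau_squeeze:
  assumes lr: "0 < l" "l < r" "r < 1" and pq: "0 < p" "p \<le> q" "q < 1"
  shows "\<exists>c\<in>Ftau_set. \<exists>a w. 0 < a \<and> a < w \<and> w < 1 \<and> supported_in {a..w} c \<and> c ` {p..q} \<subseteq> {l<..<r}"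
proof -
  define m where "m = (l + r) / 2"
  obtain a where a: "a \<in> Ztau" "0 < a" "a < min p l" using Ztau_dense[of 0 "min p l"] lr pq by auto
  obtain w where w: "w \<in> Ztau" "max q r < w" "w < 1" using Ztau_dense[of "max q r" 1] lr pq by auto
  obtain w' where w': "w' \<in> Ztau" "m < w'" "w' < r" using Ztau_dense[of m r] lr unfolding m_def by auto
  have order: "a < l" "l < m" "m < w'" "w' < w" "a < p" "q < w" using a w w' lr unfolding m_def by auto
  \<comment> \<open>\<open>d1\<close> moves \<open>[p, q]\<close> below \<open>m\<close>; then \<open>finv d2\<close> moves it above \<open>l\<close>, keeping it below \<open>w' < r\<close>.\<close>
  obtain d1 where d1: "d1 \<in> Ftau_set" "supported_in {a<..<w} d1" "d1 q < m"
    using bump_power_pushing_left[of a w q m] a w order pq by auto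
  have d1p: "a < d1 p" using supported_in_mem[OF bij_is_inj[OF Ftau_bij[OF d1(1)]] d1(2), of p] order pq by simp
  obtain d2 where d2: "d2 \<in> Ftau_set" "supported_in {a<..<w'} d2" "d2 l < d1 p"
    using bump_power_pushing_left[of a w' l "d1 p"] a w' w order d1p by auto
  have inj_d2: "inj (finv d2)" using bij_is_inj[OF bij_imp_bij_inv[OF Ftau_bij[OF d2(1)]]] .
  have supp_d2: "supported_in {a<..<w'} (finv d2)"
    using supported_in_inv[OF bij_is_inj[OF Ftau_bij[OF d2(1)]] d2(2)] .
  define c where "c = finv d2 \<circ> d1"
  have "c \<in> Ftau_set" unfolding c_def using Ftau_comp Ftau_inv d1 d2 by blast
  moreover have "supported_in {a..w} c"
  proof -
    have "supported_in {a..w} d1" by (rule supported_in_mono[OF d1(2)]) auto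
    moreover have "supported_in {a..w} (finv d2)" by (rule supported_in_mono[OF supp_d2]) (use order in auto)
    ultimately show ?thesis unfolding c_def by (rule supported_in_comp[rotated])
  qed
  moreover have "c t \<in> {l<..<r}" if t: "t \<in> {p..q}" for t
  proof -
    have y: "d1 p \<le> d1 t" "d1 t \<le> d1 q"
      using Ftau_le_iff[OF d1(1), of p t] Ftau_le_iff[OF d1(1), of t q] t pq by auto
    then have "d1 t \<in> {a<..<w'}" using d1p d1(3) order by auto
    then have cw': "c t \<in> {a<..<w'}" unfolding c_def using supported_in_mem[OF inj_d2 supp_d2] by simp
    have "d2 l < d2 (c t)" using d2(3) y(1) Ftau_bij[OF d2(1)] unfolding c_def by simp
    moreover have "l \<in> {0..1}" "c t \<in> {0..1}" using cw' order lr w a(2) by auto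
    ultimately have "l < c t" using Ftau_less_iff[OF d2(1), of l "c t"] by simp
    then show ?thesis using cw' w' by auto
  qed
  ultimately show ?thesis using a(2) w(3) order
    by (intro bexI[of _ c] exI[of _ a] exI[of _ w]) (auto simp: image_subset_iff)
qed

lemma Ftau'_squeeze:
  assumes lr: "0 < l" "l < r" "r < 1" and pq: "0 < p" "p \<le> q" "q < 1"
  shows "\<exists>d\<in>Ftau'. d ` {p..q} \<subseteq> {l<..<r}"
proof -
  obtain c a w where c: "c \<in> Ftau_set" "supported_in {a..w} c" "c ` {p..q} \<subseteq> {l<..<r}"
    and aw: "0 < a" "a < w" "w < 1"
    using Ftau_squeeze[OF lr pq] by blast
  have "0 < w" using aw by simp
  then obtain k where k: "k \<in> Ftau_set" "k w < p" using Ftau_push_below[of w p] aw pq by blast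
  have "commutator c k t = c t" if "t \<in> {p..q}" for t
  proof (rule commutator_agrees_off_image[OF Ftau_bij[OF k(1)] bij_is_inj[OF Ftau_bij[OF c(1)]] c(2)])
    show "t \<notin> k ` {a..w}" using Ftau_image_atLeastAtMost[OF k(1), of a w] aw k(2) that by auto
  qed
  then have "commutator c k ` {p..q} \<subseteq> {l<..<r}" using c(3) by auto
  moreover have "commutator c k \<in> Ftau'" using commutator_in_Ftau' c(1) k(1) by blast
  ultimately show ?thesis by blast
qed

lemma Ftau'_nontrivial: "\<exists>d\<in>Ftau'. d \<noteq> id"
proof -
  define a where "a = tau * tau"
  have a: "a \<in> Ztau" "0 < a" "a < tau"
    unfolding a_def using Ztau_mult tau_pos tau_less_1 by auto
  define u where "u = bump a tau"
  have u: "u \<in> Ftau_set" "supported_in {a<..<tau} u"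
    unfolding u_def using bump_in_Ftau supported_in_bump a tau_less_1 by auto
  obtain k where k: "k \<in> Ftau_set" "k tau < a" using Ftau_push_below tau_pos tau_less_1 a by blast
  define t where "t = (a + tau) / 2"
  have t: "a < t" "t < tau" unfolding t_def using a by auto
  have "t \<notin> k ` {a<..<tau}"
    using Ftau_image_atLeastAtMost[OF k(1), of a tau] a tau_less_1 k(2) t by fastforce
  then have "commutator u k t = u t"
    by (rule commutator_agrees_off_image[OF Ftau_bij[OF k(1)] bij_is_inj[OF Ftau_bij[OF u(1)]] u(2)])
  also have "\<dots> < t" unfolding u_def using bump_less t by simp
  finally have "commutator u k \<noteq> id" by auto
  then show ?thesis using commutator_in_Ftau' u(1) k(1) by blast
qed

lemma Ftau'_correction:
  assumes u: "u \<in> Ftau_set" "supported_in {p..q} u" and k: "k \<in> Ftau_set" and pq: "0 \<le> p" "q \<le> 1"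
  obtains w where "w \<in> Ftau_set" "supported_in {k p..k q} w" "u \<circ> w \<in> Ftau'"
proof
  show "k \<circ> finv u \<circ> finv k \<in> Ftau_set" using u k Ftau_comp Ftau_inv by blast
  show "supported_in {k p..k q} (k \<circ> finv u \<circ> finv k)"
    using supported_in_conj_Ftau[OF k supported_in_inv[OF bij_is_inj[OF Ftau_bij[OF u(1)]] u(2)]] pq .
  have "u \<circ> (k \<circ> finv u \<circ> finv k) = commutator u k" unfolding commutator_def by (simp add: o_assoc)
  then show "u \<circ> (k \<circ> finv u \<circ> finv k) \<in> Ftau'" using commutator_in_Ftau' u(1) k by simp
qed

section \<open>Normal subgroups of \<open>F\<^sub>\<tau>\<close>\<close>

lemma exists_displaced_interval:
  fixes g :: "real \<Rightarrow> real"
  assumes cont: "continuous_on {0..1} g" and x0: "0 < x0" "x0 < 1" and moved: "g x0 \<noteq> x0"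
  shows "\<exists>l r. 0 < l \<and> l < r \<and> r < 1 \<and> (\<forall>t\<in>{l<..<r}. g t \<notin> {l<..<r})"
proof -
  define e where "e = \<bar>g x0 - x0\<bar>"
  have e: "e > 0" unfolding e_def using moved by simp
  obtain d where d: "d > 0" "\<forall>t\<in>{0..1}. dist t x0 < d \<longrightarrow> dist (g t) (g x0) < e / 3"
    using cont x0 e unfolding continuous_on_iff by (metis atLeastAtMost_iff divide_pos_pos less_imp_le zero_less_numeral)
  define \<delta> where "\<delta> = min d (min (e / 3) (min (x0 / 2) ((1 - x0) / 2)))"
  have "\<delta> > 0" unfolding \<delta>_def using d e x0 by simp
  moreover have "\<delta> \<le> d" "\<delta> \<le> e / 3" "\<delta> \<le> x0 / 2" "\<delta> \<le> (1 - x0) / 2"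
    unfolding \<delta>_def by (simp_all only: min.cobounded1 min.coboundedI2)
  ultimately have \<delta>: "\<delta> > 0" "\<delta> \<le> d" "\<delta> \<le> e / 3" "\<delta> \<le> x0 / 2" "\<delta> \<le> (1 - x0) / 2"
    by blast+
  have "g t \<notin> {x0 - \<delta><..<x0 + \<delta>}" if t: "t \<in> {x0 - \<delta><..<x0 + \<delta>}" for t
  proof -
    have "t \<in> {0..1}" "dist t x0 < d" using t x0 \<delta> by (auto simp: dist_real_def)
    then have "\<bar>g t - g x0\<bar> < e / 3" using d(2) by (auto simp: dist_real_def)
    moreover have "e \<le> \<bar>g t - x0\<bar> + \<bar>g t - g x0\<bar>" unfolding e_def by linarith
    ultimately have "\<delta> < \<bar>g t - x0\<bar>" using \<delta>(3) by linarith
    then show ?thesis by auto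
  qed
  moreover have "0 < x0 - \<delta>" "x0 + \<delta> < 1" using x0 \<delta> by auto
  ultimately show ?thesis using \<delta>(1) by (intro exI[of _ "x0 - \<delta>"] exI[of _ "x0 + \<delta>"]) auto
qed

abbreviation Ftau'_group :: "(real \<Rightarrow> real) monoid" where
  "Ftau'_group \<equiv> Ftau\<lparr>carrier := Ftau'\<rparr>"

lemma group_Ftau'_group: "group Ftau'_group"
  using group.subgroup_imp_group[OF group_Ftau subgroup_Ftau'] .

lemma inv_Ftau'_group: "x \<in> Ftau' \<Longrightarrow> inv\<^bsub>Ftau'_group\<^esub> x = finv x"
  using group.m_inv_consistent[OF group_Ftau subgroup_Ftau'] inv_Ftau Ftau'_subset by fastforce

locale displacing_normal_subgroup =
  fixes H :: "(real \<Rightarrow> real) set" and g :: "real \<Rightarrow> real" and l r :: real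
  assumes normal: "H \<lhd> Ftau'_group"
    and g_mem: "g \<in> H"
    and interval: "0 < l" "l < r" "r < 1"
    and displaces: "\<forall>t\<in>{l<..<r}. g t \<notin> {l<..<r}"
begin

lemma H_subset: "H \<subseteq> Ftau'"
  using normal_imp_subgroup[OF normal] subgroup.subset by fastforce

lemma H_Ftau: "h \<in> H \<Longrightarrow> h \<in> Ftau_set"
  using H_subset Ftau'_subset by blast

lemma H_bij: "h \<in> H \<Longrightarrow> bij h"
  using H_Ftau Ftau_bij by blast

lemma H_comp: "h1 \<in> H \<Longrightarrow> h2 \<in> H \<Longrightarrow> h1 \<circ> h2 \<in> H"
  using subgroup.m_closed[OF normal_imp_subgroup[OF normal]] by simp

lemma H_inv: "h \<in> H \<Longrightarrow> finv h \<in> H"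
  using subgroup.m_inv_closed[OF normal_imp_subgroup[OF normal]] inv_Ftau'_group H_subset by fastforce

lemma H_conj: "d \<in> Ftau' \<Longrightarrow> h \<in> H \<Longrightarrow> d \<circ> h \<circ> finv d \<in> H"
  using normal.inv_op_closed2[OF normal] inv_Ftau'_group by fastforce

lemma commutator_mem_if_supported_in_displaced:
  assumes x: "x \<in> Ftau'" "supported_in {l<..<r} x" and y: "y \<in> Ftau'" "supported_in {l<..<r} y"
  shows "commutator x y \<in> H"
proof -
  have bij: "bij g" "bij x" "bij y" using g_mem H_bij x y Ftau'_subset Ftau_bij by auto
  define z where "z = g \<circ> finv x \<circ> finv g"
  have bij_z: "bij z" unfolding z_def using bij by (simp add: bij_comp bij_imp_bij_inv)
  have "supported_in (g ` {l<..<r}) z"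
    unfolding z_def using supported_in_conj[OF bij_is_surj supported_in_inv] bij bij_is_inj x(2) by blast
  moreover have "g ` {l<..<r} \<inter> {l<..<r} = {}" using displaces by blast
  ultimately have "z \<circ> y = y \<circ> z"
    using supported_in_disjoint_commute[OF bij_is_inj[OF bij_z] bij_is_inj[OF bij(3)] _ y(2)] by blast
  then have "commutator (x \<circ> z) y = commutator x y" by (rule commutator_comp_commuting[OF bij(2) bij_z])
  moreover have "commutator x g = x \<circ> z" unfolding commutator_def z_def by (simp add: o_assoc)
  moreover have xg: "commutator x g \<in> H"
    unfolding commutator_def using H_comp[OF H_conj[OF x(1) g_mem] H_inv[OF g_mem]] by (simp add: o_assoc)
  moreover have "commutator (commutator x g) y = commutator x g \<circ> (y \<circ> finv (commutator x g) \<circ> finv y)"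
    unfolding commutator_def[of "commutator x g"] by (simp add: o_assoc)
  then have "commutator (commutator x g) y \<in> H" using H_comp[OF xg H_conj[OF y(1) H_inv[OF xg]]] by simp
  ultimately show ?thesis by simp
qed

lemma commutator_mem_if_compactly_supported_in_Ftau':
  assumes x: "x \<in> Ftau'" "supported_in {p..q} x" and y: "y \<in> Ftau'" "supported_in {p..q} y"
    and pq: "0 < p" "p \<le> q" "q < 1"
  shows "commutator x y \<in> H"
proof -
  obtain d where d: "d \<in> Ftau'" "d ` {p..q} \<subseteq> {l<..<r}" using Ftau'_squeeze[OF interval pq] by blast
  have bij: "bij d" "bij x" "bij y" using d x y Ftau'_subset Ftau_bij by auto
  have "d \<circ> x \<circ> finv d \<in> Ftau'" "d \<circ> y \<circ> finv d \<in> Ftau'"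
    using Ftau'_comp Ftau'_inv d(1) x(1) y(1) by blast+
  moreover have "supported_in {l<..<r} (d \<circ> x \<circ> finv d)" "supported_in {l<..<r} (d \<circ> y \<circ> finv d)"
    using supported_in_mono[OF supported_in_conj[OF bij_is_surj[OF bij(1)]] d(2)] x(2) y(2) by blast+
  ultimately have "d \<circ> commutator x y \<circ> finv d \<in> H"
    using commutator_mem_if_supported_in_displaced conj_commutator[OF bij] by simp
  then have "finv d \<circ> (d \<circ> commutator x y \<circ> finv d) \<circ> finv (finv d) \<in> H"
    using H_conj Ftau'_inv d(1) by blast
  then show ?thesis using bij(1) by (simp add: inv_inv_eq fun_eq_iff comp_def)
qed

lemma commutator_mem_if_compactly_supported:
  assumes u: "u \<in> Ftau_set" "supported_in {p..q} u" and v: "v \<in> Ftau_set" "supported_in {p..q} v"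
    and pq: "0 < p" "p \<le> q" "q < 1"
  shows "commutator u v \<in> H"
proof -
  obtain k where k: "k \<in> Ftau_set" "k q < p" using Ftau_push_below[of q p] pq by auto
  define m where "m = finv k"
  have m: "m \<in> Ftau_set" unfolding m_def using Ftau_inv[OF k(1)] .
  have bij: "bij u" "bij v" "bij k" using u v k Ftau_bij by auto
  have "k (m p) = p" unfolding m_def using bij(3) by simp
  then have mp: "q < m p" using Ftau_less_iff[OF k(1), of q "m p"] Ftau_mem_01[OF m, of p] k(2) pq by auto
  \<comment> \<open>As \<open>w1\<close> is supported left of \<open>[p, q]\<close> and \<open>w2\<close> right of it, the commutator of
     \<open>u \<circ> w1\<close> and \<open>v \<circ> w2\<close> is still \<open>commutator u v\<close>.\<close>
  obtain w1 where w1: "w1 \<in> Ftau_set" "supported_in {k p..k q} w1" "u \<circ> w1 \<in> Ftau'"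
    using Ftau'_correction[OF u k(1)] pq by auto
  obtain w2 where w2: "w2 \<in> Ftau_set" "supported_in {m p..m q} w2" "v \<circ> w2 \<in> Ftau'"
    using Ftau'_correction[OF v m] pq by auto
  have bij_w: "bij w1" "bij w2" using w1(1) w2(1) Ftau_bij by auto
  have kp: "0 < k p" and mq: "m q < 1" using Ftau_mem_open01[OF k(1), of p] Ftau_mem_open01[OF m, of q] pq by auto
  have kq: "k p \<le> k q" and mpq: "m p \<le> m q" using Ftau_le_iff[OF k(1), of p q] Ftau_le_iff[OF m, of p q] pq by auto
  have sub: "{p..q} \<subseteq> {k p..m q}" "{k p..k q} \<subseteq> {k p..m q}" "{m p..m q} \<subseteq> {k p..m q}"
    using k(2) mp kq mpq pq(2) by auto
  have "supported_in {k p..m q} (u \<circ> w1)" "supported_in {k p..m q} (v \<circ> w2)"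
    using supported_in_comp supported_in_mono[OF u(2) sub(1)] supported_in_mono[OF v(2) sub(1)]
      supported_in_mono[OF w1(2) sub(2)] supported_in_mono[OF w2(2) sub(3)] by blast+
  then have "commutator (u \<circ> w1) (v \<circ> w2) \<in> H"
    using commutator_mem_if_compactly_supported_in_Ftau'[OF w1(3) _ w2(3)] kp mq k(2) mp kq mpq pq
    by fastforce
  moreover have "commutator (u \<circ> w1) (v \<circ> w2) = commutator u v"
  proof -
    have "{p..q} \<subseteq> {p..m q}" "{m p..m q} \<subseteq> {p..m q}" using mp mpq pq(2) by auto
    then have "supported_in {p..m q} (v \<circ> w2)"
      using supported_in_comp supported_in_mono[OF v(2)] supported_in_mono[OF w2(2)] by blast
    then have "w1 \<circ> (v \<circ> w2) = (v \<circ> w2) \<circ> w1"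
      using supported_in_disjoint_commute[OF bij_is_inj[OF bij_w(1)] _ w1(2)] bij_w bij k(2)
      by (auto simp: bij_comp bij_is_inj)
    moreover have "w2 \<circ> u = u \<circ> w2"
      using supported_in_disjoint_commute[OF bij_is_inj[OF bij_w(2)] bij_is_inj[OF bij(1)] w2(2) u(2)] mp
      by auto
    ultimately show ?thesis by (rule commutator_comp_comp_commuting[OF bij(1,2) bij_w])
  qed
  ultimately show ?thesis by simp
qed

definition core :: "(real \<Rightarrow> real) set" where
  "core = {x \<in> Ftau_set. \<forall>c\<in>Ftau_set. c \<circ> x \<circ> finv c \<in> H}"

lemma core_subset: "core \<subseteq> H"
proof
  fix x assume "x \<in> core"
  then have "id \<circ> x \<circ> finv id \<in> H" unfolding core_def using Ftau_id by blast
  then show "x \<in> H" by simp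
qed

lemma core_comp:
  assumes "x \<in> core" "y \<in> core"
  shows "x \<circ> y \<in> core"
proof -
  have "c \<circ> (x \<circ> y) \<circ> finv c \<in> H" if c: "c \<in> Ftau_set" for c
    using H_comp assms c conj_comp[OF Ftau_bij[OF c]] unfolding core_def by auto
  moreover have "x \<circ> y \<in> Ftau_set" using assms Ftau_comp unfolding core_def by blast
  ultimately show ?thesis unfolding core_def by blast
qed

lemma core_inv:
  assumes "x \<in> core"
  shows "finv x \<in> core"
proof -
  have x: "x \<in> Ftau_set" using assms unfolding core_def by blast
  have "c \<circ> finv x \<circ> finv c \<in> H" if c: "c \<in> Ftau_set" for c
    using H_inv assms c conj_inv[OF Ftau_bij[OF c] Ftau_bij[OF x]] unfolding core_def by fastforce
  moreover have "finv x \<in> Ftau_set" using Ftau_inv x by blast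
  ultimately show ?thesis unfolding core_def by blast
qed

lemma core_conj:
  assumes x: "x \<in> core" and c: "c \<in> Ftau_set"
  shows "c \<circ> x \<circ> finv c \<in> core"
proof -
  have "d \<circ> (c \<circ> x \<circ> finv c) \<circ> finv d \<in> H" if d: "d \<in> Ftau_set" for d
  proof -
    have "d \<circ> c \<in> Ftau_set" using Ftau_comp d c by blast
    then have "(d \<circ> c) \<circ> x \<circ> finv (d \<circ> c) \<in> H" using x unfolding core_def by blast
    then show ?thesis using conj_conj[OF Ftau_bij[OF c] Ftau_bij[OF d]] by simp
  qed
  moreover have "c \<circ> x \<circ> finv c \<in> Ftau_set" using x c Ftau_comp Ftau_inv unfolding core_def by blast
  ultimately show ?thesis unfolding core_def by blast
qed

lemma commutator_in_core_if_compactly_supported: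
  assumes u: "compactly_supported u" and v: "compactly_supported v"
  shows "commutator u v \<in> core"
proof -
  obtain p1 q1 where 1: "0 < p1" "p1 \<le> q1" "q1 < 1" "supported_in {p1..q1} u" and uF: "u \<in> Ftau_set"
    using u unfolding compactly_supported_def by blast
  obtain p2 q2 where 2: "0 < p2" "p2 \<le> q2" "q2 < 1" "supported_in {p2..q2} v" and vF: "v \<in> Ftau_set"
    using v unfolding compactly_supported_def by blast
  define p where "p = min p1 p2"
  define q where "q = max q1 q2"
  have pq: "0 < p" "p \<le> q" "q < 1" unfolding p_def q_def using 1 2 by auto
  have "{p1..q1} \<subseteq> {p..q}" "{p2..q2} \<subseteq> {p..q}" unfolding p_def q_def by auto
  then have supp: "supported_in {p..q} u" "supported_in {p..q} v"
    using supported_in_mono 1(4) 2(4) by blast+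
  have "c \<circ> commutator u v \<circ> finv c \<in> H" if c: "c \<in> Ftau_set" for c
  proof -
    have "0 < c p" "c p \<le> c q" "c q < 1"
      using Ftau_mem_open01[OF c, of p] Ftau_mem_open01[OF c, of q] Ftau_le_iff[OF c, of p q] pq by auto
    moreover have "supported_in {c p..c q} (c \<circ> u \<circ> finv c)" "supported_in {c p..c q} (c \<circ> v \<circ> finv c)"
      using supported_in_conj_Ftau[OF c] supp pq by auto
    moreover have "c \<circ> u \<circ> finv c \<in> Ftau_set" "c \<circ> v \<circ> finv c \<in> Ftau_set"
      using c uF vF Ftau_comp Ftau_inv by blast+
    ultimately have "commutator (c \<circ> u \<circ> finv c) (c \<circ> v \<circ> finv c) \<in> H"
      using commutator_mem_if_compactly_supported by blast
    then show ?thesis using conj_commutator[OF Ftau_bij[OF c] Ftau_bij[OF uF] Ftau_bij[OF vF]] by simp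
  qed
  moreover have "commutator u v \<in> Ftau_set" using commutator_in_Ftau' Ftau'_subset uF vF by blast
  ultimately show ?thesis unfolding core_def by blast
qed

lemma commutator_in_core_if_right_compactly_supported:
  assumes b: "b \<in> Ftau_set" and c: "compactly_supported c"
  shows "commutator b c \<in> core"
proof -
  obtain p q where pq: "0 < p" "p \<le> q" "q < 1" "supported_in {p..q} c" and cF: "c \<in> Ftau_set"
    using c unfolding compactly_supported_def by blast
  obtain s where s: "compactly_supported s" "\<forall>t\<in>{p..q}. s t = b t"
    using compactly_supported_agreeing[OF b pq(1-3)] by blast
  have sF: "s \<in> Ftau_set" using s(1) unfolding compactly_supported_def by blast
  have "b \<circ> c \<circ> finv b = s \<circ> c \<circ> finv s"
    using conj_eq_if_agree_on_support[OF Ftau_bij[OF b] Ftau_bij[OF sF] bij_is_inj[OF Ftau_bij[OF cF]] pq(4) s(2)] .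
  then have "commutator b c = commutator s c" unfolding commutator_def by (simp add: o_assoc)
  then show ?thesis using commutator_in_core_if_compactly_supported[OF s(1) c] by simp
qed

lemma commutator_in_core:
  assumes a: "a \<in> Ftau_set" and b: "b \<in> Ftau_set"
  shows "commutator a b \<in> core"
proof -
  obtain i j ac where ac: "compactly_supported ac" and a_eq: "a = finv (end_bumps tau tau i j) \<circ> ac"
    using Ftau_decompose[OF a] by blast
  obtain i' j' bc where bc: "compactly_supported bc" and b_eq: "b = finv (end_bumps tau tau i' j') \<circ> bc"
    using Ftau_decompose[OF b] by blast
  define e1 where "e1 = end_bumps tau tau i j"
  define e2 where "e2 = end_bumps tau tau i' j'"
  have Z: "tau \<in> Ztau" "0 < tau" "tau \<le> tau" "tau < 1" using tau_pos tau_less_1 by simp_all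
  have e: "bij e1" "bij e2" unfolding e1_def e2_def using end_bumps_in_Ftau[OF Z(1,1,2-4)] Ftau_bij by blast+
  define \<alpha> where "\<alpha> = finv e1"
  define \<beta> where "\<beta> = finv e2"
  have \<alpha>\<beta>: "\<alpha> \<in> Ftau_set" "\<beta> \<in> Ftau_set"
    unfolding \<alpha>_def \<beta>_def e1_def e2_def using Ftau_inv end_bumps_in_Ftau[OF Z(1,1,2-4)] by blast+
  have acF: "ac \<in> Ftau_set" and bcF: "bc \<in> Ftau_set" using ac bc unfolding compactly_supported_def by blast+
  have "\<alpha> \<circ> \<beta> = finv (e2 \<circ> e1)" unfolding \<alpha>_def \<beta>_def using o_inv_distrib[OF e(2,1)] by simp
  also have "\<dots> = finv (e1 \<circ> e2)" unfolding e1_def e2_def using end_bumps_commute[OF Z(1,1,2-4)] by simp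
  also have "\<dots> = \<beta> \<circ> \<alpha>" unfolding \<alpha>_def \<beta>_def using o_inv_distrib[OF e(1,2)] by simp
  finally have "commutator a b =
    (\<alpha> \<circ> (commutator ac \<beta> \<circ> (\<beta> \<circ> commutator ac bc \<circ> finv \<beta>)) \<circ> finv \<alpha>) \<circ> (\<beta> \<circ> commutator \<alpha> bc \<circ> finv \<beta>)"
    unfolding a_eq b_eq e1_def[symmetric] e2_def[symmetric] \<alpha>_def[symmetric] \<beta>_def[symmetric]
    by (rule commutator_comp_comp[OF Ftau_bij[OF \<alpha>\<beta>(1)] Ftau_bij[OF \<alpha>\<beta>(2)] Ftau_bij[OF acF] Ftau_bij[OF bcF]])
  moreover have "commutator ac \<beta> \<in> core"
    using core_inv[OF commutator_in_core_if_right_compactly_supported[OF \<alpha>\<beta>(2) ac]]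
      inv_commutator[OF Ftau_bij[OF \<alpha>\<beta>(2)] Ftau_bij[OF acF]] by simp
  moreover have "commutator ac bc \<in> core" using commutator_in_core_if_compactly_supported[OF ac bc] .
  moreover have "commutator \<alpha> bc \<in> core" using commutator_in_core_if_right_compactly_supported[OF \<alpha>\<beta>(1) bc] .
  ultimately show ?thesis using core_comp core_conj \<alpha>\<beta> by metis
qed

lemma Ftau'_subset_H: "Ftau' \<subseteq> H"
proof -
  have "subgroup H Ftau"
  proof (rule group.subgroupI[OF group_Ftau])
    show "H \<subseteq> carrier Ftau" "H \<noteq> {}" using H_Ftau g_mem by auto
    show "inv\<^bsub>Ftau\<^esub> h \<in> H" if "h \<in> H" for h using H_inv H_Ftau inv_Ftau that by simp
    show "h1 \<otimes>\<^bsub>Ftau\<^esub> h2 \<in> H" if "h1 \<in> H" "h2 \<in> H" for h1 h2 using H_comp that by simp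
  qed
  moreover have "derived_set Ftau Ftau_set \<subseteq> H"
  proof
    fix x assume "x \<in> derived_set Ftau Ftau_set"
    then obtain h1 h2 where h: "h1 \<in> Ftau_set" "h2 \<in> Ftau_set"
      "x = h1 \<otimes>\<^bsub>Ftau\<^esub> h2 \<otimes>\<^bsub>Ftau\<^esub> inv\<^bsub>Ftau\<^esub> h1 \<otimes>\<^bsub>Ftau\<^esub> inv\<^bsub>Ftau\<^esub> h2" by auto
    then have "x = commutator h1 h2" by (simp add: inv_Ftau commutator_def)
    then show "x \<in> H" using commutator_in_core[OF h(1,2)] core_subset by blast
  qed
  ultimately show ?thesis unfolding derived_def using group.generate_subgroup_incl[OF group_Ftau] by simp
qed

end

lemma normal_Ftau'_group_trivial_or_all:
  assumes H: "H \<lhd> Ftau'_group"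
  shows "H = {id} \<or> H = Ftau'"
proof (cases "H \<subseteq> {id}")
  case True
  then show ?thesis using subgroup.one_closed[OF normal_imp_subgroup[OF H]] by auto
next
  case False
  then obtain g where g: "g \<in> H" "g \<noteq> id" by blast
  then obtain x0 where x0: "g x0 \<noteq> x0" by (auto simp: fun_eq_iff)
  have gF: "g \<in> Ftau_set" using g(1) normal_imp_subgroup[OF H] subgroup.subset Ftau'_subset by fastforce
  have "x0 \<in> {0..1}"
  proof (rule ccontr)
    assume "x0 \<notin> {0..1}"
    then have "g x0 = x0" by (rule supported_inD[OF Ftau_setD(1)[OF gF]])
    then show False using x0 by simp
  qed
  moreover have "x0 \<noteq> 0" "x0 \<noteq> 1" using x0 Ftau_endpoints[OF gF] by auto
  ultimately have "0 < x0" "x0 < 1" by auto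
  then obtain l r where "0 < l" "l < r" "r < 1" "\<forall>t\<in>{l<..<r}. g t \<notin> {l<..<r}"
    using exists_displaced_interval[OF Ftau_setD(3)[OF gF] _ _ x0] by blast
  then have "displacing_normal_subgroup H g l r"
    unfolding displacing_normal_subgroup_def using H g(1) by blast
  then interpret displacing_normal_subgroup H g l r .
  show ?thesis using Ftau'_subset_H H_subset by blast
qed

theorem mainTheorem5:
  shows "simple_grp (Ftau\<lparr>carrier := derived Ftau (carrier Ftau)\<rparr>)"
  unfolding simple_grp_def carrier_Ftau
proof (intro conjI allI impI)
  show "group Ftau'_group" by (rule group_Ftau'_group)
  show "carrier Ftau'_group \<noteq> {\<one>\<^bsub>Ftau'_group\<^esub>}" using Ftau'_nontrivial by auto
  fix H assume "H \<lhd> Ftau'_group"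
  then show "H = carrier Ftau'_group \<or> H = {\<one>\<^bsub>Ftau'_group\<^esub>}"
    using normal_Ftau'_group_trivial_or_all by auto
qed

end
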